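(* Let $W$ be a symmetric, singular channel with $R_{\mathrm{cr}}<C(W)$ and no all-zero column, let $R_\infty<R<C(W)$, $\bar R=\frac{R+R_\infty}{2}$, fix $k>0$ and set $R_N=R-\frac kN$. Fix $x_{\mathrm o}\in\mathcal{X}$ and let $\mathbf{x}_{\mathrm o}^N$ be the all-$x_{\mathrm o}$ sequence. Let $\psi_1\in\mathcal{X}$ and $\psi_n:\mathcal{Y}^{n-1}\to\mathcal{X}$ for $n=2,\dots,N$ be arbitrary. (i) For every $r>0$, $\sum_{\mathbf{y}^N\in\mathcal{S}(r)}W(y_1|\psi_1)\prod_{n=2}^NW(y_n|\psi_n(\mathbf{y}^{n-1}))=W\{\mathcal{S}(r)\mid\mathbf{x}_{\mathrm o}^N\}$. (ii) There is a constant $\tilde K>0$ (depending on $R,\bar R$ and $W$) such that for all sufficiently large $N$, $$W\{\mathcal{S}(R_N)\mid\mathbf{x}_{\mathrm o}^N\}\ge\frac{\tilde K}{\sqrt N}\exp\{-N\,\mathrm{E}_{\mathrm{SP}}(R)\}>0.$$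
   Context: $\mathcal{X},\mathcal{Y}$ finite; memoryless channel. Symmetric (Gallager): outputs partitionable into subsets within each of which every row of the transition submatrix is a permutation of every other row and every column of every other column. Singular: $W(y|x)W(y|z)>0$ implies $W(y|x)=W(y|z)$. $\alpha_y=\sum_{x:W(y|x)>0}\frac1{|\mathcal{X}|}$ and $\mathcal{S}(r)=\{\mathbf{y}^N\in\mathcal{Y}^N:\frac1N\sum_{n=1}^N\ln\frac1{\alpha_{y_n}}\le r\}$. $\mathrm{E}_{\mathrm{SP}}(R)=\max_Q\min_{V:I(Q;V)\le R}D(V\|W|Q)$; $R_\infty$ the largest rate below which $\mathrm{E}_{\mathrm{SP}}=\infty$; $R_{\mathrm{cr}}$ the critical rate; $C(W)$ the capacity. *)

theory Defs
  imports "HOL-Analysis.Analysis" "HOL-Library.Disjoint_Sets" "HOL-Library.Extended_Real"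
begin

text \<open>Channels: W x y stands for W(y|x); input alphabet 'x, output alphabet 'y (finite types).\<close>

definition pdist :: "('a::finite \<Rightarrow> real) \<Rightarrow> bool" where
  "pdist Q \<longleftrightarrow> (\<forall>a. Q a \<ge> 0) \<and> (\<Sum>a\<in>UNIV. Q a) = 1"

definition channel :: "('x::finite \<Rightarrow> 'y::finite \<Rightarrow> real) \<Rightarrow> bool" where
  "channel W \<longleftrightarrow> (\<forall>x. pdist (W x))"

definition gallager_symmetric :: "('x::finite \<Rightarrow> 'y::finite \<Rightarrow> real) \<Rightarrow> bool" where
  "gallager_symmetric W \<longleftrightarrow>
     (\<exists>P. partition_on (UNIV :: 'y set) P \<and>
        (\<forall>B\<in>P. (\<forall>x x'. \<exists>\<sigma>. bij_betw \<sigma> B B \<and> (\<forall>y\<in>B. W x' y = W x (\<sigma> y))) \<and>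
               (\<forall>y\<in>B. \<forall>y'\<in>B. \<exists>\<pi>. bij \<pi> \<and> (\<forall>x. W x y' = W (\<pi> x) y))))"

definition singular_channel :: "('x::finite \<Rightarrow> 'y::finite \<Rightarrow> real) \<Rightarrow> bool" where
  "singular_channel W \<longleftrightarrow> (\<forall>x z y. W x y * W z y > 0 \<longrightarrow> W x y = W z y)"

definition alpha :: "('x::finite \<Rightarrow> 'y::finite \<Rightarrow> real) \<Rightarrow> 'y \<Rightarrow> real" where
  "alpha W y = real (card {x. W x y > 0}) / real CARD('x)"

definition Sset :: "('x::finite \<Rightarrow> 'y::finite \<Rightarrow> real) \<Rightarrow> nat \<Rightarrow> real \<Rightarrow> 'y list set" where
  "Sset W N r = {ys. length ys = N \<and> (1 / real N) * (\<Sum>n<N. ln (1 / alpha W (ys ! n))) \<le> r}"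

definition prob_const :: "('x::finite \<Rightarrow> 'y::finite \<Rightarrow> real) \<Rightarrow> nat \<Rightarrow> 'x \<Rightarrow> 'y list set \<Rightarrow> real" where
  "prob_const W N x A = (\<Sum>ys\<in>A. \<Prod>n<N. W x (ys ! n))"

definition out_dist :: "('x::finite \<Rightarrow> real) \<Rightarrow> ('x \<Rightarrow> 'y::finite \<Rightarrow> real) \<Rightarrow> 'y \<Rightarrow> real" where
  "out_dist Q V y = (\<Sum>x\<in>UNIV. Q x * V x y)"

definition mutual_info :: "('x::finite \<Rightarrow> real) \<Rightarrow> ('x \<Rightarrow> 'y::finite \<Rightarrow> real) \<Rightarrow> real" where
  "mutual_info Q V = (\<Sum>x\<in>UNIV. \<Sum>y\<in>UNIV.
      (if Q x * V x y > 0 then Q x * V x y * ln (V x y / out_dist Q V y) else 0))"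

definition cond_div :: "('x::finite \<Rightarrow> 'y::finite \<Rightarrow> real) \<Rightarrow> ('x \<Rightarrow> 'y \<Rightarrow> real) \<Rightarrow> ('x \<Rightarrow> real) \<Rightarrow> ereal" where
  "cond_div V W Q = (\<Sum>x\<in>UNIV. \<Sum>y\<in>UNIV.
      (if Q x * V x y = 0 then 0
       else if W x y = 0 then \<infinity>
       else ereal (Q x * V x y * ln (V x y / W x y))))"

definition E_SP :: "('x::finite \<Rightarrow> 'y::finite \<Rightarrow> real) \<Rightarrow> real \<Rightarrow> ereal" where
  "E_SP W R = (SUP Q\<in>{Q. pdist Q}. INF V\<in>{V. channel V \<and> mutual_info Q V \<le> R}. cond_div V W Q)"

text \<open>Random coding exponent (Csiszar-Koerner form), used to define the critical rate.\<close>
definition E_r :: "('x::finite \<Rightarrow> 'y::finite \<Rightarrow> real) \<Rightarrow> real \<Rightarrow> ereal" where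
  "E_r W R = (SUP Q\<in>{Q. pdist Q}. INF V\<in>{V. channel V}.
               cond_div V W Q + ereal (max 0 (mutual_info Q V - R)))"

definition capacity :: "('x::finite \<Rightarrow> 'y::finite \<Rightarrow> real) \<Rightarrow> real" where
  "capacity W = (SUP Q\<in>{Q. pdist Q}. mutual_info Q W)"

definition R_inf :: "('x::finite \<Rightarrow> 'y::finite \<Rightarrow> real) \<Rightarrow> real" where
  "R_inf W = Sup {R. E_SP W R = \<infinity>}"

definition R_cr :: "('x::finite \<Rightarrow> 'y::finite \<Rightarrow> real) \<Rightarrow> real" where
  "R_cr W = Inf {R. E_r W R = E_SP W R}"

end

(*
  By Gallager symmetry, the law of ln (1 / alpha_y) under W(.|x) is the same for every input x.
  Hence, whatever a feedback encoder psi does, the statistic sum_n ln (1 / alpha_{y_n}) defining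
  S(r) is a random walk with i.i.d. steps of that law; this gives (i) and reduces (ii) to a lower
  large-deviation bound for a walk with finitely many step values:
    P(S_N <= N R - k) >= c / sqrt N * exp (- N (- theta R - ln E exp (- theta X)))
  for some theta >= 0.  Tilting exponentially by theta moves the mean of the steps to some
  m <= R with theta (R - m) = 0, so it suffices that the tilted walk hits a window of fixed width
  just below N m - k with probability of order 1 / sqrt N.  This local bound comes from splitting
  off a symmetric two-point component of the step law: the binomial number of two-point steps
  puts mass of order 1 / sqrt N on every lattice point near the centre, while Chebyshev controls
  the remaining steps.  Finally, bounding E_SP(R) with the uniform input distribution and the
  Gibbs inequality gives - theta R - ln E exp (- theta X) <= E_SP(R), which is finite since R > R_inf.
*)
theory Submission
  imports Defs
begin

section \<open>Random walks with finitely many step values\<close>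

text \<open>\<open>(walk_step I p a ^^ n) G s\<close> is the expectation of \<open>G (s + a i\<^sub>1 + \<dots> + a i\<^sub>n)\<close> for
  independent indices \<open>i\<^sub>k \<in> I\<close> of law \<open>p\<close>.\<close>
definition walk_step :: "'i set \<Rightarrow> ('i \<Rightarrow> real) \<Rightarrow> ('i \<Rightarrow> real) \<Rightarrow> (real \<Rightarrow> real) \<Rightarrow> real \<Rightarrow> real" where
  "walk_step I p a G s = (\<Sum>i\<in>I. p i * G (s + a i))"

lemma walk_step_pow_Suc:
  "(walk_step I p a ^^ Suc n) G s = (\<Sum>i\<in>I. p i * (walk_step I p a ^^ n) G (s + a i))"
  by (simp add: walk_step_def)

lemma walk_step_pow_mono:
  assumes "\<forall>i\<in>I. p i \<ge> 0" and "\<And>t. G t \<le> H t"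
  shows "(walk_step I p a ^^ n) G s \<le> (walk_step I p a ^^ n) H s"
proof (induction n arbitrary: s)
  case (Suc n)
  then show ?case
    unfolding walk_step_pow_Suc by (intro sum_mono) (simp add: assms(1) mult_left_mono)
qed (simp add: assms(2))

lemma walk_step_pow_linear:
  "(walk_step I p a ^^ n) (\<lambda>t. c * G t + d * H t) s
     = c * (walk_step I p a ^^ n) G s + d * (walk_step I p a ^^ n) H s"
  by (induction n arbitrary: s)
     (simp_all add: walk_step_def sum.distrib sum_distrib_left algebra_simps)

lemma walk_step_pow_scale: "(walk_step I p a ^^ n) (\<lambda>t. c * G t) s = c * (walk_step I p a ^^ n) G s"
  using walk_step_pow_linear[where c=c and d=0 and H=G] by simp

lemma walk_step_sum:
  "walk_step I p a (\<lambda>t. \<Sum>j\<in>S. c j * f j t) s = (\<Sum>j\<in>S. c j * walk_step I p a (f j) s)"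
  by (simp add: walk_step_def sum_distrib_left sum.swap[of _ I] mult_ac)

lemma walk_step_pow_nonneg:
  assumes "\<forall>i\<in>I. p i \<ge> 0" and "\<And>t. G t \<ge> 0"
  shows "(walk_step I p a ^^ n) G s \<ge> 0"
  using walk_step_pow_mono[OF assms(1), where G="\<lambda>t. 0 * G t" and H=G] assms(2)
  unfolding walk_step_pow_scale by simp

lemma walk_step_pow_degenerate:
  assumes "(\<Sum>i\<in>I. p i) = 1" and "\<And>i. i \<in> I \<Longrightarrow> p i \<noteq> 0 \<Longrightarrow> a i = L"
  shows "(walk_step I p a ^^ n) G s = G (s + real n * L)"
proof (induction n arbitrary: s)
  case (Suc n)
  have "(walk_step I p a ^^ Suc n) G s = (\<Sum>i\<in>I. p i * G (s + L + real n * L))"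
    unfolding walk_step_pow_Suc Suc by (intro sum.cong refl) (metis assms(2) mult_zero_left)
  also have "\<dots> = G (s + real (Suc n) * L)"
    using assms(1) by (simp add: sum_distrib_right[symmetric] algebra_simps)
  finally show ?case .
qed simp

lemma walk_step_pow_const:
  assumes "(\<Sum>i\<in>I. p i) = 1"
  shows "(walk_step I p a ^^ n) (\<lambda>_. c) s = c"
  using assms by (induction n arbitrary: s) (simp_all add: walk_step_def sum_distrib_right[symmetric])

lemma walk_step_pow_commute:
  "(walk_step I p a ^^ n) (walk_step J q b G) s = walk_step J q b ((walk_step I p a ^^ n) G) s"
  by (induction n arbitrary: s)
     (simp_all add: walk_step_def sum_distrib_left sum.swap[of _ I] algebra_simps)

lemma binomial_sum_Suc:
  fixes f :: "nat \<Rightarrow> real"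
  shows "(\<Sum>M\<le>Suc N. real (Suc N choose M) * f M)
           = (\<Sum>M\<le>N. real (N choose M) * f M) + (\<Sum>M\<le>N. real (N choose M) * f (Suc M))"
proof -
  have "(\<Sum>M\<le>Suc N. real (Suc N choose M) * f M)
      = f 0 + (\<Sum>M\<le>N. real (N choose Suc M) * f (Suc M)) + (\<Sum>M\<le>N. real (N choose M) * f (Suc M))"
    by (subst sum.atMost_Suc_shift) (simp add: sum.distrib algebra_simps)
  moreover have "f 0 + (\<Sum>M\<le>N. real (N choose Suc M) * f (Suc M)) = (\<Sum>M\<le>N. real (N choose M) * f M)"
  proof -
    have "(\<Sum>M\<le>N. real (N choose Suc M) * f (Suc M)) = (\<Sum>M<N. real (N choose Suc M) * f (Suc M))"
      by (simp add: lessThan_Suc_atMost[symmetric] binomial_eq_0)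
    then show ?thesis by (simp add: sum.atMost_shift)
  qed
  ultimately show ?thesis by simp
qed

lemma walk_step_pow_binomial:
  assumes T: "\<And>G s. T G s = c1 * walk_step I p a G s + c2 * walk_step J q b G s"
  shows "(T ^^ N) G s = (\<Sum>M\<le>N. real (N choose M) * c1 ^ (N - M) * c2 ^ M
            * (walk_step I p a ^^ (N - M)) ((walk_step J q b ^^ M) G) s)"
proof (induction N arbitrary: s)
  case (Suc N)
  let ?X = "\<lambda>i j t. (walk_step I p a ^^ i) ((walk_step J q b ^^ j) G) t"
  have IH: "(T ^^ N) G = (\<lambda>t. \<Sum>M\<le>N. real (N choose M) * c1 ^ (N - M) * c2 ^ M * ?X (N - M) M t)"
    using Suc by (simp add: fun_eq_iff)
  have "(T ^^ Suc N) G s = c1 * walk_step I p a ((T ^^ N) G) s + c2 * walk_step J q b ((T ^^ N) G) s"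
    by (simp add: T)
  also have "\<dots> = (\<Sum>M\<le>N. real (N choose M) * (c1 ^ (Suc N - M) * c2 ^ M * ?X (Suc N - M) M s))
      + (\<Sum>M\<le>N. real (N choose M) * (c1 ^ (Suc N - Suc M) * c2 ^ Suc M * ?X (Suc N - Suc M) (Suc M) s))"
    unfolding IH walk_step_sum sum_distrib_left
    by (intro arg_cong2[where f="(+)"] sum.cong refl)
       (simp_all add: Suc_diff_le walk_step_pow_commute mult_ac)
  also have "\<dots> = (\<Sum>M\<le>Suc N. real (Suc N choose M) * (c1 ^ (Suc N - M) * c2 ^ M * ?X (Suc N - M) M s))"
    by (rule binomial_sum_Suc[symmetric])
  finally show ?case by (simp only: mult.assoc)
qed simp

lemma walk_step_pow_square:
  assumes "(\<Sum>i\<in>I. p i) = 1" and "m = (\<Sum>i\<in>I. p i * a i)" and "v = (\<Sum>i\<in>I. p i * (a i - m)\<^sup>2)"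
  shows "(walk_step I p a ^^ n) (\<lambda>t. (t - c)\<^sup>2) s = (s + real n * m - c)\<^sup>2 + real n * v"
proof (induction n arbitrary: s)
  case (Suc n)
  define A where "A = s + real n * m - c + m"
  have centered: "(\<Sum>i\<in>I. p i * (a i - m)) = 0"
    using assms(1,2) by (simp add: right_diff_distrib sum_subtractf sum_distrib_right[symmetric])
  have "(walk_step I p a ^^ Suc n) (\<lambda>t. (t - c)\<^sup>2) s
      = (\<Sum>i\<in>I. A\<^sup>2 * p i + 2 * A * (p i * (a i - m)) + p i * (a i - m)\<^sup>2 + real n * v * p i)"
    unfolding walk_step_pow_Suc Suc A_def
    by (intro sum.cong refl) (simp add: power2_eq_square algebra_simps)
  also have "\<dots> = A\<^sup>2 + real (Suc n) * v"
    by (simp only: sum.distrib sum_distrib_left[symmetric] centered assms(1) flip: assms(3)) (simp add: algebra_simps)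
  finally show ?case by (simp add: A_def algebra_simps)
qed simp

lemma walk_step_pow_chebyshev:
  assumes p: "\<forall>i\<in>I. p i \<ge> 0" and p1: "(\<Sum>i\<in>I. p i) = 1"
    and m: "m = (\<Sum>i\<in>I. p i * a i)" and v: "v = (\<Sum>i\<in>I. p i * (a i - m)\<^sup>2)"
    and "h \<ge> 0" and "D > 0" and G0: "\<And>t. G t \<ge> 0"
    and Gh: "\<And>t. \<bar>t - (s + real n * m)\<bar> \<le> D \<Longrightarrow> G t \<ge> h"
  shows "(walk_step I p a ^^ n) G s \<ge> h * (1 - real n * v / D\<^sup>2)"
proof -
  let ?c = "s + real n * m"
  have "h * 1 + (- h / D\<^sup>2) * (t - ?c)\<^sup>2 \<le> G t" for t
  proof (cases "\<bar>t - ?c\<bar> \<le> D")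
    case True
    have "0 \<le> h * (t - ?c)\<^sup>2 / D\<^sup>2" using \<open>h \<ge> 0\<close> by simp
    then show ?thesis using Gh[OF True] by simp
  next
    case False
    then have "D\<^sup>2 \<le> (t - ?c)\<^sup>2" using \<open>D > 0\<close> abs_le_square_iff[of D "t - ?c"] by simp
    then have "h \<le> h * (t - ?c)\<^sup>2 / D\<^sup>2" using \<open>h \<ge> 0\<close> \<open>D > 0\<close> by (simp add: le_divide_eq mult_left_mono)
    then show ?thesis using G0[of t] by (simp add: field_simps)
  qed
  then have "(walk_step I p a ^^ n) (\<lambda>t. h * 1 + (- h / D\<^sup>2) * (t - ?c)\<^sup>2) s \<le> (walk_step I p a ^^ n) G s"
    by (intro walk_step_pow_mono[OF p])
  also have "(walk_step I p a ^^ n) (\<lambda>t. h * 1 + (- h / D\<^sup>2) * (t - ?c)\<^sup>2) s = h * (1 - real n * v / D\<^sup>2)"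
    unfolding walk_step_pow_linear walk_step_pow_square[OF p1 m v] walk_step_pow_const[OF p1]
    by (simp add: field_simps)
  finally show ?thesis .
qed

definition two_point_walk :: "real \<Rightarrow> real \<Rightarrow> real \<Rightarrow> (real \<Rightarrow> real) \<Rightarrow> real \<Rightarrow> real" where
  "two_point_walk r u v = walk_step UNIV (\<lambda>b. if b then r else 1 - r) (\<lambda>b. if b then v else u)"

lemma two_point_walk_pow:
  "(two_point_walk r u v ^^ M) G s
     = (\<Sum>j\<le>M. real (M choose j) * (1 - r) ^ (M - j) * r ^ j * G (s + real (M - j) * u + real j * v))"
proof -
  have "(two_point_walk r u v ^^ M) G s = (\<Sum>j\<le>M. real (M choose j) * (1 - r) ^ (M - j) * r ^ j *
      (walk_step {()} (\<lambda>_. 1) (\<lambda>_. u) ^^ (M - j)) ((walk_step {()} (\<lambda>_. 1) (\<lambda>_. v) ^^ j) G) s)"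
    by (rule walk_step_pow_binomial) (simp add: two_point_walk_def walk_step_def UNIV_bool)
  also have "\<dots> = (\<Sum>j\<le>M. real (M choose j) * (1 - r) ^ (M - j) * r ^ j * G (s + real (M - j) * u + real j * v))"
    by (simp add: walk_step_pow_degenerate)
  finally show ?thesis .
qed

lemma two_point_walk_nonneg:
  assumes "0 \<le> r" "r \<le> 1" "\<And>t. G t \<ge> 0"
  shows "(two_point_walk r u v ^^ n) G s \<ge> 0"
  unfolding two_point_walk_def using assms by (intro walk_step_pow_nonneg) auto

lemma binomial_distribution_moments:
  fixes r :: real
  shows "(\<Sum>M\<le>N. real (N choose M) * (1 - r) ^ (N - M) * r ^ M) = 1"
    and "(\<Sum>M\<le>N. real (N choose M) * (1 - r) ^ (N - M) * r ^ M * (real M - real N * r)\<^sup>2)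
           = real N * (r * (1 - r))"
proof -
  have p1: "(\<Sum>b\<in>UNIV. if b then r else 1 - r) = 1" by (simp add: UNIV_bool)
  have m: "r = (\<Sum>b\<in>UNIV. (if b then r else 1 - r) * (if b then 1 else 0))" by (simp add: UNIV_bool)
  have v: "r * (1 - r) = (\<Sum>b\<in>UNIV. (if b then r else 1 - r) * ((if b then 1 else 0) - r)\<^sup>2)"
    by (simp add: UNIV_bool power2_eq_square algebra_simps)
  show "(\<Sum>M\<le>N. real (N choose M) * (1 - r) ^ (N - M) * r ^ M) = 1"
    using two_point_walk_pow[where r=r and u=0 and v=1 and M=N and G="\<lambda>_. 1" and s=0]
      walk_step_pow_const[OF p1]
    by (simp add: two_point_walk_def)
  show "(\<Sum>M\<le>N. real (N choose M) * (1 - r) ^ (N - M) * r ^ M * (real M - real N * r)\<^sup>2) = real N * (r * (1 - r))"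
    using two_point_walk_pow[where r=r and u=0 and v=1 and M=N and G="\<lambda>t. (t - real N * r)\<^sup>2" and s=0]
      walk_step_pow_square[OF p1 m v, where n=N and c="real N * r" and s=0]
    by (simp add: two_point_walk_def)
qed

lemma walk_step_pow_tilt:
  assumes "Z \<noteq> 0"
  shows "(walk_step I p a ^^ N) G s = Z ^ N * exp (- \<theta> * s)
           * (walk_step I (\<lambda>i. p i * exp (- \<theta> * a i) / Z) a ^^ N) (\<lambda>t. exp (\<theta> * t) * G t) s"
proof (induction N arbitrary: s)
  case (Suc N)
  have "(walk_step I p a ^^ Suc N) G s = (\<Sum>i\<in>I. Z ^ Suc N * exp (- \<theta> * s)
      * (p i * exp (- \<theta> * a i) / Z
         * (walk_step I (\<lambda>i. p i * exp (- \<theta> * a i) / Z) a ^^ N) (\<lambda>t. exp (\<theta> * t) * G t) (s + a i)))"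
    unfolding walk_step_pow_Suc Suc
    using assms by (intro sum.cong refl) (simp add: exp_add[symmetric] algebra_simps)
  also have "\<dots> = Z ^ Suc N * exp (- \<theta> * s)
      * (walk_step I (\<lambda>i. p i * exp (- \<theta> * a i) / Z) a ^^ Suc N) (\<lambda>t. exp (\<theta> * t) * G t) s"
    by (simp only: walk_step_pow_Suc sum_distrib_left)
  finally show ?case .
qed (simp add: exp_minus field_simps)

section \<open>Binomial coefficients near the centre\<close>

lemma Suc_times_binomial_real:
  "real (Suc k) * real (n choose Suc k) = real (n - k) * real (n choose k)"
  by (metis binomial_absorb_comp binomial_absorption of_nat_mult)

lemma Suc_times_binomial_odd:
  "real (Suc n) * real (Suc (2 * n) choose n) = real (2 * n + 1) * real ((2 * n) choose n)"
proof -
  have "Suc (2 * n) * ((2 * n) choose n) = (Suc (2 * n) choose Suc n) * Suc n"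
    by (rule Suc_times_binomial_eq)
  moreover have "Suc (2 * n) choose Suc n = Suc (2 * n) choose n"
    using binomial_symmetric[of "Suc n" "Suc (2 * n)"] by simp
  ultimately have "Suc n * (Suc (2 * n) choose n) = (2 * n + 1) * ((2 * n) choose n)"
    by simp
  then show ?thesis by (metis of_nat_mult)
qed

lemma central_binomial_ratio:
  "real ((2 * Suc n) choose Suc n) / 4 ^ Suc n = real ((2 * n) choose n) / 4 ^ n * ((2 * n + 1) / (2 * (n + 1)))"
proof -
  define X where "X = real ((2 * Suc n) choose Suc n)"
  define Y where "Y = real ((2 * n) choose n)"
  have "2 * Suc n = Suc (Suc (2 * n))" by simp
  then have "Suc n * ((2 * Suc n) choose Suc n) = (2 * Suc n) * (Suc (2 * n) choose n)"
    using Suc_times_binomial[of n "Suc (2 * n)"] by (simp only:)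
  then have "real (Suc n) * X = 2 * (real (Suc n) * real (Suc (2 * n) choose n))"
    unfolding X_def by (metis of_nat_mult of_nat_numeral mult.assoc)
  also have "\<dots> = 2 * real (2 * n + 1) * Y"
    unfolding Y_def Suc_times_binomial_odd by simp
  finally have XY: "real (Suc n) * X = 2 * real (2 * n + 1) * Y" .
  then have X: "X = 2 * real (2 * n + 1) * Y / real (Suc n)"
    by (simp add: eq_divide_eq mult.commute)
  have "real (Suc n) > 0" "(4::real) ^ n > 0" by simp_all
  then show ?thesis unfolding X_def[symmetric] Y_def[symmetric] X
    by (simp add: divide_simps del: of_nat_Suc) (simp add: algebra_simps)
qed

lemma central_binomial_step_factor:
  assumes "(x::real) \<ge> 1"
  shows "1 / (4 * (x + 1)) \<le> 1 / (4 * x) * ((2 * x + 1) / (2 * (x + 1)))\<^sup>2"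
proof -
  have pos: "16 * x * (x + 1)\<^sup>2 > 0" and "x \<noteq> 0" "x + 1 \<noteq> 0" using assms by simp_all
  then have "1 / (4 * (x + 1)) = 4 * x * (x + 1) / (16 * x * (x + 1)\<^sup>2)"
    by (simp add: divide_simps power2_eq_square) (simp add: algebra_simps)
  also have "\<dots> \<le> (2 * x + 1)\<^sup>2 / (16 * x * (x + 1)\<^sup>2)"
    using pos by (intro divide_right_mono) (simp_all add: power2_eq_square algebra_simps)
  also have "\<dots> = 1 / (4 * x) * ((2 * x + 1) / (2 * (x + 1)))\<^sup>2"
    by (simp add: power_divide power_mult_distrib) (simp add: power2_eq_square algebra_simps)
  finally show ?thesis .
qed

lemma central_binomial_even_lower_bound:
  assumes "n \<ge> 1"
  shows "(real ((2 * n) choose n) / 4 ^ n)\<^sup>2 \<ge> 1 / (4 * real n)"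
  using assms
proof (induction n rule: dec_induct)
  case base
  then show ?case by (simp add: numeral_2_eq_2)
next
  case (step n)
  have "1 / (4 * real (Suc n)) \<le> 1 / (4 * real n) * ((2 * real n + 1) / (2 * (real n + 1)))\<^sup>2"
    using central_binomial_step_factor[of "real n"] step.hyps by (simp add: add.commute)
  also have "\<dots> \<le> (real ((2 * n) choose n) / 4 ^ n)\<^sup>2 * ((2 * real n + 1) / (2 * (real n + 1)))\<^sup>2"
    using step.IH by (intro mult_right_mono) auto
  also have "\<dots> = (real ((2 * Suc n) choose Suc n) / 4 ^ Suc n)\<^sup>2"
    unfolding central_binomial_ratio power_mult_distrib ..
  finally show ?case .
qed

lemma central_binomial_odd_ratio:
  "real (Suc (2 * n) choose n) / 2 ^ Suc (2 * n)
     = real ((2 * n) choose n) / 4 ^ n * ((2 * real n + 1) / (2 * (real n + 1)))"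
proof -
  define Y where "Y = real ((2 * n) choose n)"
  have X: "real (Suc (2 * n) choose n) = real (2 * n + 1) * Y / real (Suc n)"
    using Suc_times_binomial_odd[of n] unfolding Y_def[symmetric] by (simp add: eq_divide_eq mult.commute)
  have "(2::real) ^ Suc (2 * n) = 2 * 4 ^ n" by (simp add: power_mult)
  moreover have "real (Suc n) > 0" "(4::real) ^ n > 0" by simp_all
  ultimately show ?thesis unfolding Y_def[symmetric] X
    by (simp add: divide_simps del: of_nat_Suc) (simp add: algebra_simps)
qed

lemma central_binomial_square_lower_bound:
  assumes "M \<ge> 1"
  shows "(real (M choose (M div 2)) / 2 ^ M)\<^sup>2 \<ge> 1 / (16 * real M)"
proof (cases "even M")
  case True
  then obtain n where n: "M = 2 * n" by auto
  then have "n \<ge> 1" using assms by simp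
  have "1 / (16 * real M) \<le> 1 / (4 * real n)" using \<open>n \<ge> 1\<close> n by (simp add: field_simps)
  also have "\<dots> \<le> (real ((2 * n) choose n) / 4 ^ n)\<^sup>2"
    using central_binomial_even_lower_bound[OF \<open>n \<ge> 1\<close>] .
  finally show ?thesis unfolding n by (simp add: power_mult)
next
  case False
  then obtain n where n: "M = Suc (2 * n)" by (metis oddE add.commute plus_1_eq_Suc)
  then have M: "M choose (M div 2) = Suc (2 * n) choose n" by simp
  show ?thesis
  proof (cases "n = 0")
    case True
    then show ?thesis using n by (simp add: power2_eq_square)
  next
    case False
    then have "n \<ge> 1" by simp
    have half: "1 / 2 \<le> (2 * real n + 1) / (2 * (real n + 1))" by (simp add: field_simps)
    have "1 / (16 * real M) \<le> 1 / (4 * real n) * (1 / 2)\<^sup>2" using n \<open>n \<ge> 1\<close> by (simp add: field_simps)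
    also have "\<dots> \<le> (real ((2 * n) choose n) / 4 ^ n)\<^sup>2 * ((2 * real n + 1) / (2 * (real n + 1)))\<^sup>2"
      using central_binomial_even_lower_bound[OF \<open>n \<ge> 1\<close>] half by (intro mult_mono power_mono) auto
    also have "\<dots> = (real (M choose (M div 2)) / 2 ^ M)\<^sup>2"
      unfolding M unfolding n central_binomial_odd_ratio power_mult_distrib ..
    finally show ?thesis .
  qed
qed

lemma central_binomial_lower_bound_sqrt:
  assumes "M \<ge> 1"
  shows "real (M choose (M div 2)) / 2 ^ M \<ge> 1 / (4 * sqrt M)"
proof -
  have "sqrt (1 / (16 * real M)) \<le> sqrt ((real (M choose (M div 2)) / 2 ^ M)\<^sup>2)"
    using central_binomial_square_lower_bound[OF assms] by (rule real_sqrt_le_mono)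
  then show ?thesis by (simp add: real_sqrt_divide real_sqrt_mult)
qed

lemma exp_minus_two_mult_le:
  assumes "0 \<le> (x::real)" "x \<le> 1 / 2"
  shows "exp (- 2 * x) \<le> 1 - x"
proof -
  have "exp (- 2 * x) \<le> 1 / (1 + 2 * x)"
    using exp_ge_add_one_self[of "2 * x"] assms by (simp add: exp_minus field_simps)
  also have "\<dots> \<le> 1 - x"
  proof -
    have "1 \<le> (1 - x) * (1 + 2 * x)"
      using assms mult_left_mono[of "2 * x" 1 x] by (simp add: algebra_simps)
    then show ?thesis using assms by (simp add: divide_le_eq)
  qed
  finally show ?thesis .
qed

lemma binomial_ratio_factor_ineq:
  fixes M c d :: real
  assumes "M > 0" "2 * c \<le> M" "M - 1 \<le> 2 * c" "d \<ge> 0"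
  shows "(M - 4 * (d + 1)) * (c + d + 1) \<le> M * (M - c - d)"
proof -
  define P Q S T U where "P = (d + 1) * (d + 1)" and "Q = M * (M - 2 * c)" and "S = (d + 1) * c"
    and "T = (d + 1) * (M - 1)" and "U = d * M"
  have "M * (M - c - d) - (M - 4 * (d + 1)) * (c + d + 1) = Q - 2 * U - M + 4 * S + 4 * P"
    and "T = U + M - d - 1"
    unfolding P_def Q_def S_def T_def U_def by (simp_all add: algebra_simps)
  moreover have "Q \<ge> 0" "P \<ge> d + 1" using assms unfolding P_def Q_def by simp_all
  moreover have "T \<le> 2 * S"
    using assms mult_left_mono[of "M - 1" "2 * c" "d + 1"] unfolding S_def T_def by (simp add: algebra_simps)
  ultimately show ?thesis using assms by linarith
qed

lemma binomial_above_center_ge: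
  assumes "8 * d \<le> M"
  shows "real (M choose (M div 2 + d)) \<ge> real (M choose (M div 2)) * exp (- 4 * real d * (real d + 1) / real M)"
  using assms
proof (induction d)
  case (Suc d)
  define c where "c = M div 2"
  define x where "x = 4 * (real d + 1) / M"
  have M: "real M > 0" and x: "0 \<le> x" "x \<le> 1 / 2"
    using Suc.prems by (auto simp: x_def field_simps)
  have c: "2 * real c \<le> M" "real M - 1 \<le> 2 * real c" "c + d \<le> M"
    using Suc.prems div_times_less_eq_dividend[of M 2] unfolding c_def by simp_all
  have "(1 - x) * real (Suc (c + d)) = (real M - 4 * (real d + 1)) * (real c + real d + 1) / M"
    unfolding x_def using M by (simp add: field_simps)
  also have "\<dots> \<le> real (M - (c + d))"
    using binomial_ratio_factor_ineq[OF M c(1,2), of "real d"] M c(3)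
    by (simp add: divide_le_eq of_nat_diff mult.commute diff_diff_eq)
  finally have "(1 - x) * real (Suc (c + d)) * real (M choose (c + d))
      \<le> real (M - (c + d)) * real (M choose (c + d))"
    by (intro mult_right_mono) simp_all
  then have step: "(1 - x) * real (M choose (c + d)) \<le> real (M choose Suc (c + d))"
    unfolding Suc_times_binomial_real[symmetric] by (simp add: mult_ac del: of_nat_Suc)
  have IH: "exp (- 2 * x) * (real (M choose c) * exp (- 4 * real d * (real d + 1) / real M))
      \<le> (1 - x) * real (M choose (c + d))"
    using exp_minus_two_mult_le[OF x] Suc.IH Suc.prems x unfolding c_def by (intro mult_mono) auto
  have exps: "exp (- 2 * x) * exp (- 4 * real d * (real d + 1) / real M)
      = exp (- 4 * real (Suc d) * (real (Suc d) + 1) / real M)"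
    unfolding x_def exp_add[symmetric] using M by (simp add: field_simps)
  have "real (M choose c) * exp (- 4 * real (Suc d) * (real (Suc d) + 1) / real M)
      = exp (- 2 * x) * (real (M choose c) * exp (- 4 * real d * (real d + 1) / real M))"
    unfolding exps[symmetric] by (rule mult.left_commute)
  also have "\<dots> \<le> real (M choose Suc (c + d))" using IH step by (rule order_trans)
  finally show ?case by (simp add: c_def)
qed simp

lemma binomial_near_center_lower_bound:
  assumes M: "M \<ge> 1" and j: "j \<le> M" and dj: "\<bar>real j - M / 2\<bar> \<le> d" and d: "8 * (d + 1) \<le> M"
  shows "real (M choose j) / 2 ^ M \<ge> exp (- 4 * (d + 1) * (d + 2) / M) / (4 * sqrt M)"
proof -
  define c where "c = M div 2"
  have c: "2 * real c \<le> M" "real M - 1 \<le> 2 * real c" unfolding c_def by linarith+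
  obtain e where e: "real e \<le> d + 1" "M choose j = M choose (c + e)"
  proof (cases "c \<le> j")
    case True
    show ?thesis by (rule that[of "j - c"]) (use True dj c in auto)
  next
    case False
    have "M - j = c + (M - j - c)" using False j c by linarith
    moreover have "M choose j = M choose (M - j)" using j by (rule binomial_symmetric)
    ultimately show ?thesis using False j dj c by (intro that[of "M - j - c"]) (auto simp: of_nat_diff)
  qed
  have "0 \<le> d" using dj by linarith
  have "8 * real e \<le> M" using e(1) d[unfolded distrib_left] by linarith
  then have "8 * e \<le> M" by linarith
  have "real e * (real e + 1) \<le> (d + 1) * (d + 2)"
    using e(1) \<open>0 \<le> d\<close> by (intro mult_mono) auto
  then have "- 4 * ((d + 1) * (d + 2)) / M \<le> - 4 * (real e * (real e + 1)) / M"
    by (intro divide_right_mono) auto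
  then have "exp (- 4 * (d + 1) * (d + 2) / M) \<le> exp (- 4 * real e * (real e + 1) / real M)"
    by (simp only: mult.assoc exp_le_cancel_iff)
  then have "exp (- 4 * (d + 1) * (d + 2) / M) / (4 * sqrt M)
      \<le> exp (- 4 * real e * (real e + 1) / real M) * (1 / (4 * sqrt M))"
    by (simp add: divide_right_mono)
  also have "\<dots> \<le> exp (- 4 * real e * (real e + 1) / real M) * (real (M choose c) / 2 ^ M)"
    using central_binomial_lower_bound_sqrt[OF M] unfolding c_def by (intro mult_left_mono) auto
  also have "\<dots> \<le> real (M choose j) / 2 ^ M"
    using binomial_above_center_ge[OF \<open>8 * e \<le> M\<close>] e(2) unfolding c_def
    by (simp add: divide_right_mono mult.commute)
  finally show ?thesis .
qed

section \<open>A local lower bound for random walks\<close>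

lemma two_point_walk_hits_window:
  fixes u v b t d :: real
  assumes uv: "u < v" and d: "d \<ge> 2" "8 * (d + 1) \<le> M"
    and close: "\<bar>t + real M * (u + v) / 2 - b\<bar> \<le> (d - 2) * (v - u)"
  obtains j where "j \<le> M" "\<bar>real j - M / 2\<bar> \<le> d" "t + real (M - j) * u + real j * v \<in> {b - (v - u)..b}"
proof -
  define g where "g = v - u"
  define y where "y = (b - g - t - real M * u) / g"
  have g: "g > 0" using uv unfolding g_def by simp
  have "\<bar>(t + real M * (u + v) / 2 - b) / g\<bar> \<le> d - 2"
    using close g unfolding abs_divide g_def[symmetric] by (simp add: divide_le_eq)
  moreover have "y - M / 2 = - ((t + real M * (u + v) / 2 - b) / g) - 1"
    using g unfolding y_def g_def by (simp add: field_simps)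
  ultimately have y: "\<bar>y - M / 2\<bar> \<le> d - 1" by linarith
  \<comment> \<open>the endpoint after j steps up is t + M * u + j * g, so j is the first integer above y\<close>
  define j where "j = nat \<lceil>y\<rceil>"
  have "0 \<le> y" using y d by (simp add: abs_le_iff)
  then have "real j = of_int \<lceil>y\<rceil>" unfolding j_def by simp
  then have j: "y \<le> real j" "real j \<le> y + 1"
    by (simp_all add: le_of_int_ceiling of_int_ceiling_le_add_one)
  have jM: "j \<le> M" "\<bar>real j - M / 2\<bar> \<le> d" using j y d by (simp_all add: abs_le_iff)
  have "t + real (M - j) * u + real j * v = t + real M * u + real j * g"
    using jM(1) unfolding g_def by (simp add: of_nat_diff algebra_simps)
  moreover have "y * g \<le> real j * g" "real j * g \<le> (y + 1) * g"
    using j g by (simp_all add: mult_right_mono)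
  moreover have "y * g = b - g - t - real M * u" unfolding y_def using g by simp
  ultimately have "t + real (M - j) * u + real j * v \<in> {b - g..b}"
    by (simp add: distrib_right)
  with jM show ?thesis using that unfolding g_def by blast
qed

lemma two_point_walk_window:
  fixes u v b t d :: real
  assumes uv: "u < v" and d: "d \<ge> 2" "8 * (d + 1) \<le> M"
    and close: "\<bar>t + real M * (u + v) / 2 - b\<bar> \<le> (d - 2) * (v - u)"
  shows "(two_point_walk (1 / 2) u v ^^ M) (indicator {b - (v - u)..b}) t
           \<ge> exp (- 4 * (d + 1) * (d + 2) / M) / (4 * sqrt M)"
proof -
  obtain j where jM: "j \<le> M" "\<bar>real j - M / 2\<bar> \<le> d"
    and hit: "indicator {b - (v - u)..b} (t + real (M - j) * u + real j * v) = (1::real)"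
    using two_point_walk_hits_window[OF uv d close] by (metis indicator_simps(1))
  have "M \<ge> 1" using d by simp
  have "exp (- 4 * (d + 1) * (d + 2) / M) / (4 * sqrt M) \<le> real (M choose j) / 2 ^ M"
    using binomial_near_center_lower_bound[OF \<open>M \<ge> 1\<close> jM d(2)] .
  also have "\<dots> = real (M choose j) * (1 - 1 / 2) ^ (M - j) * (1 / 2) ^ j
      * indicator {b - (v - u)..b} (t + real (M - j) * u + real j * v)"
  proof -
    have "(2::real) ^ (M - j) * 2 ^ j = 2 ^ M" using jM(1) by (simp flip: power_add)
    then show ?thesis unfolding hit by (simp add: power_one_over)
  qed
  also have "\<dots> \<le> (two_point_walk (1 / 2) u v ^^ M) (indicator {b - (v - u)..b}) t"
    unfolding two_point_walk_pow using jM(1)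
    by (intro member_le_sum[where f="\<lambda>j. real (M choose j) * (1 - 1 / 2) ^ (M - j) * (1 / 2) ^ j
        * indicator {b - (v - u)..b} (t + real (M - j) * u + real j * v)"]) auto
  finally show ?thesis .
qed

lemma walk_then_two_point_window:
  fixes b d x E :: real
  assumes q: "\<forall>i\<in>I. q i \<ge> 0" "(\<Sum>i\<in>I. q i) = 1"
    and m: "m = (\<Sum>i\<in>I. q i * a i)" and v: "\<sigma> = (\<Sum>i\<in>I. q i * (a i - m)\<^sup>2)"
    and E: "E > 0" "2 * \<sigma> \<le> E\<^sup>2" and x: "x > 0" "real n \<le> x\<^sup>2"
    and uv: "u < v" and d: "d \<ge> 2" "8 * (d + 1) \<le> M"
    and close: "\<bar>real n * m + real M * (u + v) / 2 - b\<bar> + E * x \<le> (d - 2) * (v - u)"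
  shows "(walk_step I q a ^^ n) ((two_point_walk (1 / 2) u v ^^ M) (indicator {b - (v - u)..b})) 0
           \<ge> exp (- 4 * (d + 1) * (d + 2) / M) / (4 * sqrt M) / 2"
proof -
  define h where "h = exp (- 4 * (d + 1) * (d + 2) / M) / (4 * sqrt M)"
  have "h \<ge> 0" unfolding h_def by simp
  have "(walk_step I q a ^^ n) ((two_point_walk (1 / 2) u v ^^ M) (indicator {b - (v - u)..b})) 0
      \<ge> h * (1 - real n * \<sigma> / (E * x)\<^sup>2)"
  proof (rule walk_step_pow_chebyshev[OF q m v \<open>h \<ge> 0\<close>])
    show "E * x > 0" using E x by simp
    show "(two_point_walk (1 / 2) u v ^^ M) (indicator {b - (v - u)..b}) t \<ge> 0" for t
      by (rule two_point_walk_nonneg) simp_all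
    show "(two_point_walk (1 / 2) u v ^^ M) (indicator {b - (v - u)..b}) t \<ge> h"
      if "\<bar>t - (0 + real n * m)\<bar> \<le> E * x" for t
    proof -
      have "\<bar>t + real M * (u + v) / 2 - b\<bar> \<le> \<bar>t - real n * m\<bar> + \<bar>real n * m + real M * (u + v) / 2 - b\<bar>"
        using abs_triangle_ineq[of "t - real n * m" "real n * m + real M * (u + v) / 2 - b"] by simp
      then have "\<bar>t + real M * (u + v) / 2 - b\<bar> \<le> (d - 2) * (v - u)" using that close by simp
      then show ?thesis unfolding h_def by (rule two_point_walk_window[OF uv d])
    qed
  qed
  moreover have "real n * \<sigma> / (E * x)\<^sup>2 \<le> 1 / 2"
  proof -
    have "real n * \<sigma> \<le> x\<^sup>2 * (E\<^sup>2 / 2)"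
      using x E mult_mono[OF x(2), of \<sigma> "E\<^sup>2 / 2"] v q(1) by (simp add: sum_nonneg)
    then show ?thesis using E x by (simp add: divide_le_eq power_mult_distrib algebra_simps)
  qed
  moreover have "h * (1 / 2) \<le> h * (1 - real n * \<sigma> / (E * x)\<^sup>2)"
    using calculation(2) \<open>h \<ge> 0\<close> by (intro mult_left_mono) auto
  ultimately show ?thesis unfolding h_def[symmetric] by linarith
qed

lemma binomial_weights_concentrated:
  fixes \<rho> h :: real
  assumes "0 \<le> \<rho>" "\<rho> \<le> 1" "N > 0" "h \<ge> 0"
    and f0: "\<And>M. M \<le> N \<Longrightarrow> f M \<ge> 0"
    and fh: "\<And>M. M \<le> N \<Longrightarrow> \<bar>real M - real N * \<rho>\<bar> \<le> sqrt N \<Longrightarrow> f M \<ge> h"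
  shows "(\<Sum>M\<le>N. real (N choose M) * (1 - \<rho>) ^ (N - M) * \<rho> ^ M * f M) \<ge> 3 / 4 * h"
proof -
  define w where "w M = real (N choose M) * (1 - \<rho>) ^ (N - M) * \<rho> ^ M" for M
  have "h * (1 - (real M - real N * \<rho>)\<^sup>2 / N) \<le> f M" if "M \<le> N" for M
  proof (cases "\<bar>real M - real N * \<rho>\<bar> \<le> sqrt N")
    case True
    then show ?thesis
      using fh[OF that True] \<open>h \<ge> 0\<close> mult_left_le[of "1 - (real M - real N * \<rho>)\<^sup>2 / N" h] by simp
  next
    case False
    then have "(sqrt N)\<^sup>2 \<le> \<bar>real M - real N * \<rho>\<bar>\<^sup>2" by (intro power_mono) auto
    then have "real N \<le> (real M - real N * \<rho>)\<^sup>2" by simp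
    then have "h * real N \<le> h * (real M - real N * \<rho>)\<^sup>2" using \<open>h \<ge> 0\<close> by (rule mult_left_mono)
    then have "h * (1 - (real M - real N * \<rho>)\<^sup>2 / N) \<le> 0"
      using \<open>N > 0\<close> by (simp add: field_simps)
    then show ?thesis using f0[OF that] by linarith
  qed
  then have "(\<Sum>M\<le>N. w M * (h * (1 - (real M - real N * \<rho>)\<^sup>2 / N))) \<le> (\<Sum>M\<le>N. w M * f M)"
    using assms(1,2) by (intro sum_mono mult_left_mono) (auto simp: w_def)
  moreover have "(\<Sum>M\<le>N. w M * (h * (1 - (real M - real N * \<rho>)\<^sup>2 / N)))
      = h * (\<Sum>M\<le>N. w M) - h / N * (\<Sum>M\<le>N. w M * (real M - real N * \<rho>)\<^sup>2)"
    by (simp add: sum_subtractf sum_distrib_left algebra_simps)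
  also have "\<dots> = h * (1 - \<rho> * (1 - \<rho>))"
    using binomial_distribution_moments[of N \<rho>] \<open>N > 0\<close> unfolding w_def[symmetric]
    by (simp only:) (simp add: field_simps)
  moreover have "h * (1 - \<rho> * (1 - \<rho>)) = 3 / 4 * h + h * (\<rho> - 1 / 2)\<^sup>2"
    by (simp add: power2_eq_square algebra_simps)
  moreover have "h * (\<rho> - 1 / 2)\<^sup>2 \<ge> 0" using \<open>h \<ge> 0\<close> by simp
  ultimately show ?thesis unfolding w_def by linarith
qed

lemma walk_step_split_two_points:
  fixes p a :: "'i \<Rightarrow> real"
  assumes fin: "finite I" and p: "\<forall>i\<in>I. p i \<ge> 0" "(\<Sum>i\<in>I. p i) = 1"
    and i: "i0 \<in> I" "i1 \<in> I" "i0 \<noteq> i1" and \<rho>: "\<rho> \<le> p i0" "\<rho> \<le> p i1"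
  obtains q where "\<forall>i\<in>I. q i \<ge> 0" "(\<Sum>i\<in>I. q i) = 1"
    "(\<Sum>i\<in>I. p i * a i) = (1 - \<rho>) * (\<Sum>i\<in>I. q i * a i) + \<rho> * ((a i0 + a i1) / 2)"
    "\<And>G s. walk_step I p a G s = (1 - \<rho>) * walk_step I q a G s + \<rho> * two_point_walk (1 / 2) (a i0) (a i1) G s"
proof -
  have "p i0 + p i1 = (\<Sum>i\<in>{i0, i1}. p i)" using i by simp
  also have "\<dots> \<le> (\<Sum>i\<in>I. p i)" using fin i p by (intro sum_mono2) auto
  finally have "\<rho> < 1" using \<rho> p(2) by linarith
  define q where "q i = (p i - \<rho> / 2 * (of_bool (i = i0) + of_bool (i = i1))) / (1 - \<rho>)" for i
  have split: "(\<Sum>i\<in>I. p i * f i) = (1 - \<rho>) * (\<Sum>i\<in>I. q i * f i) + \<rho> * ((f i0 + f i1) / 2)" for f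
  proof -
    have "(1 - \<rho>) * (\<Sum>i\<in>I. q i * f i)
        = (\<Sum>i\<in>I. p i * f i - \<rho> / 2 * ((if i = i0 then f i else 0) + (if i = i1 then f i else 0)))"
      unfolding q_def sum_distrib_left using \<open>\<rho> < 1\<close> by (intro sum.cong refl) (simp add: field_simps)
    also have "\<dots> = (\<Sum>i\<in>I. p i * f i)
        - \<rho> / 2 * (\<Sum>i\<in>I. (if i = i0 then f i else 0) + (if i = i1 then f i else 0))"
      by (simp add: sum_subtractf sum_distrib_left)
    also have "(\<Sum>i\<in>I. (if i = i0 then f i else 0) + (if i = i1 then f i else 0)) = f i0 + f i1"
      using fin i by (simp add: sum.distrib)
    finally show ?thesis by simp
  qed
  show ?thesis
  proof (rule that)
    show "\<forall>i\<in>I. q i \<ge> 0" using p i \<rho> \<open>\<rho> < 1\<close> by (auto simp: q_def)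
    have "1 = (1 - \<rho>) * (\<Sum>i\<in>I. q i) + \<rho>" using split[of "\<lambda>_. 1"] p(2) by simp
    then have "(1 - \<rho>) * ((\<Sum>i\<in>I. q i) - 1) = 0" by (simp only: right_diff_distrib mult_1_right)
    then show "(\<Sum>i\<in>I. q i) = 1" using \<open>\<rho> < 1\<close> by simp
    show "(\<Sum>i\<in>I. p i * a i) = (1 - \<rho>) * (\<Sum>i\<in>I. q i * a i) + \<rho> * ((a i0 + a i1) / 2)"
      by (rule split)
    show "walk_step I p a G s = (1 - \<rho>) * walk_step I q a G s + \<rho> * two_point_walk (1 / 2) (a i0) (a i1) G s" for G s
      unfolding walk_step_def two_point_walk_def split[of "\<lambda>i. G (s + a i)"] by (simp add: UNIV_bool)
  qed
qed

lemma window_exponent_bound: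
  fixes C d x \<rho> :: real
  assumes "d \<ge> 2" "d + 2 \<le> C * x" "x \<ge> 1" "\<rho> > 0" "x\<^sup>2 * \<rho> / 2 \<le> real M" "real M \<le> x\<^sup>2"
  shows "exp (- 8 * C\<^sup>2 / \<rho>) / (8 * x) \<le> exp (- 4 * (d + 1) * (d + 2) / M) / (4 * sqrt M) / 2"
proof -
  have "(d + 1) * (d + 2) \<le> (C * x) * (C * x)" using assms(1,2) by (intro mult_mono) auto
  then have "4 * ((d + 1) * (d + 2)) / M \<le> 4 * ((C * x) * (C * x)) / (x\<^sup>2 * \<rho> / 2)"
    using assms(3-5) by (intro frac_le) auto
  also have "\<dots> = 8 * C\<^sup>2 / \<rho>" using \<open>x \<ge> 1\<close> by (simp add: power2_eq_square field_simps)
  finally have "- (8 * C\<^sup>2 / \<rho>) \<le> - (4 * ((d + 1) * (d + 2)) / M)" by simp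
  then have "exp (- 8 * C\<^sup>2 / \<rho>) \<le> exp (- 4 * (d + 1) * (d + 2) / M)"
    by (simp only: mult.assoc mult_minus_left minus_divide_left exp_le_cancel_iff)
  moreover have "sqrt M \<le> sqrt (x\<^sup>2)" using assms(6) by (rule real_sqrt_le_mono)
  then have "sqrt M \<le> x" using assms(3) by simp
  moreover have "0 < x\<^sup>2 * \<rho> / 2" using assms(3,4) by simp
  then have "sqrt M > 0" using assms(5) by simp
  ultimately show ?thesis by (simp add: frac_le)
qed

lemma typical_count_large:
  fixes x \<rho> C d :: real
  assumes "x * \<rho> \<ge> 16 * C" "x \<ge> 1" "C \<ge> 4" "d + 2 \<le> C * x" "\<bar>real M - x\<^sup>2 * \<rho>\<bar> \<le> x"
  shows "real M \<ge> x\<^sup>2 * \<rho> / 2" "8 * (d + 1) \<le> real M"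
proof -
  have "16 * C * x \<le> (x * \<rho>) * x" using assms(1,2) by (intro mult_right_mono) auto
  then have big: "16 * (C * x) \<le> x\<^sup>2 * \<rho>" by (simp add: power2_eq_square mult_ac)
  have low: "real M \<ge> x\<^sup>2 * \<rho> - x" using assms(5) by (simp add: abs_le_iff)
  have "4 * x \<le> C * x" using assms(2,3) by (intro mult_right_mono) auto
  then show "real M \<ge> x\<^sup>2 * \<rho> / 2" using big low assms(2) by linarith
  show "8 * (d + 1) \<le> real M"
    unfolding distrib_left using \<open>4 * x \<le> C * x\<close> big low assms(2,4) by linarith
qed

lemma mixture_mean_offset:
  fixes mq u v k \<rho> :: real
  assumes m: "m = (1 - \<rho>) * mq + \<rho> * ((u + v) / 2)" and "M \<le> N" "\<bar>real M - real N * \<rho>\<bar> \<le> x" "k \<ge> 0"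
  shows "\<bar>real (N - M) * mq + real M * (u + v) / 2 - (real N * m - k)\<bar> \<le> x * \<bar>mq - (u + v) / 2\<bar> + k"
proof -
  have "real (N - M) * mq + real M * (u + v) / 2 - (real N * m - k) = (real N * \<rho> - real M) * (mq - (u + v) / 2) + k"
    using assms(2) unfolding m by (simp add: of_nat_diff field_simps)
  moreover have "\<bar>(real N * \<rho> - real M) * (mq - (u + v) / 2)\<bar> \<le> x * \<bar>mq - (u + v) / 2\<bar>"
    using assms(3) unfolding abs_mult by (intro mult_right_mono) (auto simp: abs_minus_commute)
  ultimately show ?thesis using \<open>k \<ge> 0\<close> by (simp add: abs_le_iff)
qed

lemma walk_then_two_point_window_typical:
  fixes k \<rho> :: real
  assumes q: "\<forall>i\<in>I. q i \<ge> 0" "(\<Sum>i\<in>I. q i) = 1"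
    and mq: "mq = (\<Sum>i\<in>I. q i * a i)" and \<sigma>: "\<sigma> = (\<Sum>i\<in>I. q i * (a i - mq)\<^sup>2)"
    and uv: "u < v" and "k \<ge> 0" and "\<rho> > 0" "\<rho> \<le> 1"
    and m: "m = (1 - \<rho>) * mq + \<rho> * ((u + v) / 2)"
    and C: "C = (\<bar>mq - (u + v) / 2\<bar> + \<sigma> + 1 + k) / (v - u) + 4"
    and N: "sqrt N \<ge> 16 * C / \<rho>" and M: "M \<le> N" "\<bar>real M - real N * \<rho>\<bar> \<le> sqrt N"
  shows "(walk_step I q a ^^ (N - M)) ((two_point_walk (1 / 2) u v ^^ M)
           (indicator {real N * m - k - (v - u)..real N * m - k})) 0
         \<ge> exp (- 8 * C\<^sup>2 / \<rho>) / (8 * sqrt N)"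
proof -
  define x where "x = sqrt N"
  define A where "A = \<bar>mq - (u + v) / 2\<bar> + (\<sigma> + 1)"
  \<comment> \<open>within \<open>(\<sigma> + 1) * x\<close> of its mean, the non-two-point part leaves the M coin flips a target at
    most \<open>d - 2\<close> steps of size \<open>v - u\<close> away from their centre\<close>
  define d where "d = (A * x + k) / (v - u) + 2"
  have "\<sigma> \<ge> 0" unfolding \<sigma> using q(1) by (intro sum_nonneg) auto
  have "C \<ge> 4" unfolding C using uv \<open>k \<ge> 0\<close> \<open>\<sigma> \<ge> 0\<close> by simp
  have x: "x \<ge> 16 * C / \<rho>" "x\<^sup>2 = real N" using N unfolding x_def by simp_all
  have "x * \<rho> \<ge> 16 * C" using x(1) \<open>\<rho> > 0\<close> by (simp add: divide_le_eq)
  moreover have "16 * C \<le> 16 * C / \<rho>"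
    using \<open>C \<ge> 4\<close> \<open>\<rho> > 0\<close> \<open>\<rho> \<le> 1\<close> by (simp add: le_divide_eq mult_left_le)
  ultimately have "x \<ge> 1" using \<open>C \<ge> 4\<close> x(1) by linarith
  have "d \<ge> 2" unfolding d_def A_def using uv \<open>k \<ge> 0\<close> \<open>\<sigma> \<ge> 0\<close> \<open>x \<ge> 1\<close> by simp
  have dC: "d + 2 \<le> C * x"
  proof -
    have "(A * x + k) / (v - u) \<le> (A + k) * x / (v - u)"
      using uv \<open>x \<ge> 1\<close> \<open>k \<ge> 0\<close> mult_left_mono[of 1 x k] by (intro divide_right_mono) (auto simp: algebra_simps)
    then show ?thesis
      using \<open>x \<ge> 1\<close> unfolding d_def C A_def by (simp add: field_simps)
  qed
  have Mx: "real M \<ge> x\<^sup>2 * \<rho> / 2" "8 * (d + 1) \<le> real M"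
    using typical_count_large[OF \<open>x * \<rho> \<ge> 16 * C\<close> \<open>x \<ge> 1\<close> \<open>C \<ge> 4\<close> dC] M(2) x(2)
    unfolding x_def by auto
  have close: "\<bar>real (N - M) * mq + real M * (u + v) / 2 - (real N * m - k)\<bar> + (\<sigma> + 1) * x \<le> (d - 2) * (v - u)"
  proof -
    have "(d - 2) * (v - u) = A * x + k" unfolding d_def using uv by simp
    then show ?thesis
      using mixture_mean_offset[OF m M(1) M(2)[folded x_def] \<open>k \<ge> 0\<close>] unfolding A_def by (simp add: algebra_simps)
  qed
  have "exp (- 8 * C\<^sup>2 / \<rho>) / (8 * x) \<le> exp (- 4 * (d + 1) * (d + 2) / M) / (4 * sqrt M) / 2"
    using \<open>d \<ge> 2\<close> dC \<open>x \<ge> 1\<close> \<open>\<rho> > 0\<close> Mx(1) M(1) x(2) by (intro window_exponent_bound) auto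
  also have "\<dots> \<le> (walk_step I q a ^^ (N - M)) ((two_point_walk (1 / 2) u v ^^ M)
           (indicator {real N * m - k - (v - u)..real N * m - k})) 0"
  proof (rule walk_then_two_point_window[OF q mq \<sigma> _ _ _ _ uv \<open>d \<ge> 2\<close> Mx(2)])
    show "\<sigma> + 1 > 0" "2 * \<sigma> \<le> (\<sigma> + 1)\<^sup>2"
      using \<open>\<sigma> \<ge> 0\<close> by (simp_all add: power2_eq_square algebra_simps)
    show "x > 0" "real (N - M) \<le> x\<^sup>2" using \<open>x \<ge> 1\<close> x(2) by simp_all
    show "\<bar>real (N - M) * mq + real M * (u + v) / 2 - (real N * m - k)\<bar> + (\<sigma> + 1) * x \<le> (d - 2) * (v - u)"
      by (rule close)
  qed
  finally show ?thesis unfolding x_def .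
qed

lemma walk_step_pow_window_lower_bound:
  fixes p a :: "'i \<Rightarrow> real" and k :: real
  assumes fin: "finite I" and p: "\<forall>i\<in>I. p i \<ge> 0" "(\<Sum>i\<in>I. p i) = 1"
    and m: "m = (\<Sum>i\<in>I. p i * a i)"
    and i: "i0 \<in> I" "i1 \<in> I" "p i0 > 0" "p i1 > 0" "a i0 < m" "m < a i1" and "k \<ge> 0"
  shows "\<exists>c>0. \<forall>\<^sub>F N in sequentially.
           (walk_step I p a ^^ N) (indicator {real N * m - k - (a i1 - a i0)..real N * m - k}) 0 \<ge> c / sqrt N"
proof -
  define u v \<rho> where "u = a i0" and "v = a i1" and "\<rho> = min (p i0) (p i1)"
  have uv: "u < v" and "i0 \<noteq> i1" and "\<rho> > 0" using i unfolding u_def v_def \<rho>_def by auto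
  have "\<rho> \<le> 1" using member_le_sum[of i0 I p] fin i p unfolding \<rho>_def by auto
  obtain q where q: "\<forall>i\<in>I. q i \<ge> 0" "(\<Sum>i\<in>I. q i) = 1"
    and mq: "m = (1 - \<rho>) * (\<Sum>i\<in>I. q i * a i) + \<rho> * ((u + v) / 2)"
    and split: "\<And>G s. walk_step I p a G s = (1 - \<rho>) * walk_step I q a G s + \<rho> * two_point_walk (1 / 2) u v G s"
    using walk_step_split_two_points[OF fin p i(1,2) \<open>i0 \<noteq> i1\<close>, of \<rho> a] m
    unfolding u_def v_def \<rho>_def by auto
  define mq \<sigma> C where "mq = (\<Sum>i\<in>I. q i * a i)" and "\<sigma> = (\<Sum>i\<in>I. q i * (a i - mq)\<^sup>2)"
    and "C = (\<bar>mq - (u + v) / 2\<bar> + \<sigma> + 1 + k) / (v - u) + 4"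
  define F where "F N = (indicator {real N * m - k - (v - u)..real N * m - k} :: real \<Rightarrow> real)" for N
  have bound: "(walk_step I p a ^^ N) (F N) 0 \<ge> 3 / 4 * (exp (- 8 * C\<^sup>2 / \<rho>) / (8 * sqrt N))"
    if N: "N > 0" "sqrt N \<ge> 16 * C / \<rho>" for N
  proof -
    have "(walk_step I p a ^^ N) (F N) 0 = (\<Sum>M\<le>N. real (N choose M) * (1 - \<rho>) ^ (N - M) * \<rho> ^ M
        * (walk_step I q a ^^ (N - M)) ((two_point_walk (1 / 2) u v ^^ M) (F N)) 0)"
      using walk_step_pow_binomial[OF split[unfolded two_point_walk_def]] unfolding two_point_walk_def .
    also have "\<dots> \<ge> 3 / 4 * (exp (- 8 * C\<^sup>2 / \<rho>) / (8 * sqrt N))"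
    proof (rule binomial_weights_concentrated)
      show "(walk_step I q a ^^ (N - M)) ((two_point_walk (1 / 2) u v ^^ M) (F N)) 0 \<ge> 0" for M
        using q(1) by (intro walk_step_pow_nonneg two_point_walk_nonneg) (auto simp: F_def)
      show "(walk_step I q a ^^ (N - M)) ((two_point_walk (1 / 2) u v ^^ M) (F N)) 0
          \<ge> exp (- 8 * C\<^sup>2 / \<rho>) / (8 * sqrt N)"
        if "M \<le> N" "\<bar>real M - real N * \<rho>\<bar> \<le> sqrt N" for M
        unfolding F_def
        by (rule walk_then_two_point_window_typical[OF q mq_def \<sigma>_def uv \<open>k \<ge> 0\<close> \<open>\<rho> > 0\<close> \<open>\<rho> \<le> 1\<close>
              mq[folded mq_def] C_def N(2) that])
    qed (use \<open>\<rho> > 0\<close> \<open>\<rho> \<le> 1\<close> N(1) in auto)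
    finally show ?thesis .
  qed
  have "\<forall>\<^sub>F N in sequentially. N > 0 \<and> sqrt N \<ge> 16 * C / \<rho>"
    using eventually_gt_at_top[of 0] filterlim_compose[OF sqrt_at_top filterlim_real_sequentially]
    by (auto simp: filterlim_at_top intro: eventually_conj)
  then have "\<forall>\<^sub>F N in sequentially. (walk_step I p a ^^ N) (F N) 0 \<ge> 3 / 32 * exp (- 8 * C\<^sup>2 / \<rho>) / sqrt N"
    by (rule eventually_mono) (use bound in auto)
  then show ?thesis unfolding F_def u_def v_def by (intro exI[of _ "3 / 32 * exp (- 8 * C\<^sup>2 / \<rho>)"]) auto
qed

section \<open>Lower large deviations by exponential tilting\<close>

lemma exists_support_points_around_mean:
  fixes q l :: "'a \<Rightarrow> real"
  assumes "finite A" and q: "\<forall>y\<in>A. q y \<ge> 0" "(\<Sum>y\<in>A. q y) = 1" and m: "m = (\<Sum>y\<in>A. q y * l y)"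
    and y: "y1 \<in> A" "y2 \<in> A" "q y1 > 0" "q y2 > 0" "l y1 \<noteq> l y2"
  obtains i0 i1 where "i0 \<in> A" "i1 \<in> A" "q i0 > 0" "q i1 > 0" "l i0 < m" "m < l i1"
proof -
  have centered: "(\<Sum>y\<in>A. q y * (l y - m)) = 0"
    using q(2) m by (simp add: right_diff_distrib sum_subtractf sum_distrib_right[symmetric])
  have "\<exists>y\<in>A. q y > 0 \<and> s * (l y - m) > 0" if "s = 1 \<or> s = - 1" for s
  proof (rule ccontr)
    assume "\<not> ?thesis"
    then have nonneg: "\<forall>y\<in>A. 0 \<le> - (s * (q y * (l y - m)))"
      using q(1) by (force simp: mult.left_commute[of s] mult_nonneg_nonpos less_le)
    have "(\<Sum>y\<in>A. - (s * (q y * (l y - m)))) = 0"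
      by (simp add: sum_negf centered flip: sum_distrib_left)
    then have "\<forall>y\<in>A. - (s * (q y * (l y - m))) = 0"
      using nonneg \<open>finite A\<close> by (simp add: sum_nonneg_eq_0_iff)
    then have "l y1 = m" "l y2 = m" using y that by (auto simp: less_le)
    with y(5) show False by simp
  qed
  from this[of 1] this[of "- 1"] show ?thesis using that by auto
qed

lemma exists_negative_tilted_drift:
  fixes w l :: "'y::finite \<Rightarrow> real"
  assumes w: "\<And>y. w y \<ge> 0" and y0: "w y0 > 0" "l y0 < R"
  shows "\<exists>t\<ge>0. (\<Sum>y\<in>UNIV. w y * exp (- t * l y) * (l y - R)) < 0"
proof -
  define \<delta> B where "\<delta> = R - l y0" and "B = (\<Sum>y\<in>UNIV. w y * \<bar>l y - R\<bar>)"
  define t where "t = (B / (w y0 * \<delta>) + 1) / \<delta>"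
  have "\<delta> > 0" "B \<ge> 0" unfolding \<delta>_def B_def using y0 w by (auto intro: sum_nonneg)
  then have "t \<ge> 0" unfolding t_def using y0 by simp
  \<comment> \<open>after factoring out exp (- t * R), the term of y0 grows like exp (t * \<delta>) and dominates all others\<close>
  have "exp (t * R) * (\<Sum>y\<in>UNIV. w y * exp (- t * l y) * (l y - R))
      = (\<Sum>y\<in>UNIV. w y * exp (t * (R - l y)) * (l y - R))"
    unfolding sum_distrib_left by (intro sum.cong refl) (simp add: exp_add[symmetric] algebra_simps)
  also have "\<dots> \<le> (\<Sum>y\<in>UNIV. (if y = y0 then - w y0 * \<delta> * exp (t * \<delta>) - w y0 * \<bar>l y0 - R\<bar> else 0) + w y * \<bar>l y - R\<bar>)"
  proof (rule sum_mono)
    fix y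
    have "exp (t * (R - l y)) * (l y - R) \<le> \<bar>l y - R\<bar>"
    proof (cases "l y \<le> R")
      case True
      then show ?thesis using mult_nonneg_nonpos[of "exp (t * (R - l y))" "l y - R"] by simp
    next
      case False
      then show ?thesis
        using \<open>t \<ge> 0\<close> mult_right_mono[of "exp (t * (R - l y))" 1 "l y - R"] by (simp add: mult_nonneg_nonpos)
    qed
    then have "w y * exp (t * (R - l y)) * (l y - R) \<le> w y * \<bar>l y - R\<bar>"
      using w[of y] mult_left_mono by (simp add: mult.assoc)
    then show "w y * exp (t * (R - l y)) * (l y - R)
        \<le> (if y = y0 then - w y0 * \<delta> * exp (t * \<delta>) - w y0 * \<bar>l y0 - R\<bar> else 0) + w y * \<bar>l y - R\<bar>"
      unfolding \<delta>_def by (cases "y = y0") (simp_all add: algebra_simps)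
  qed
  also have "\<dots> = B - w y0 * \<delta> * exp (t * \<delta>) - w y0 * \<bar>l y0 - R\<bar>"
    unfolding B_def by (simp add: sum.distrib)
  also have "\<dots> < 0"
  proof -
    have "B / (w y0 * \<delta>) < exp (t * \<delta>)"
      using exp_ge_add_one_self[of "t * \<delta>"] \<open>\<delta> > 0\<close> unfolding t_def by simp
    then have "B < w y0 * \<delta> * exp (t * \<delta>)" using y0 \<open>\<delta> > 0\<close> by (simp add: divide_less_eq mult.commute)
    moreover have "0 \<le> w y0 * \<bar>l y0 - R\<bar>" using y0 by simp
    ultimately show ?thesis by linarith
  qed
  finally show ?thesis using \<open>t \<ge> 0\<close> by (auto simp: mult_less_0_iff)
qed

lemma exists_tilt_parameter:
  fixes w l :: "'y::finite \<Rightarrow> real"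
  assumes w: "\<And>y. w y \<ge> 0" and y0: "w y0 > 0" "l y0 < R"
  obtains \<theta> where "\<theta> \<ge> 0"
    "(\<Sum>y\<in>UNIV. w y * exp (- \<theta> * l y) / (\<Sum>z\<in>UNIV. w z * exp (- \<theta> * l z)) * l y) \<le> R"
    "\<theta> * (\<Sum>y\<in>UNIV. w y * exp (- \<theta> * l y) / (\<Sum>z\<in>UNIV. w z * exp (- \<theta> * l z)) * l y) = \<theta> * R"
proof -
  define g where "g \<theta> = (\<Sum>y\<in>UNIV. w y * exp (- \<theta> * l y) * (l y - R))" for \<theta>
  obtain t where "t \<ge> 0" "g t < 0" using exists_negative_tilted_drift[where w=w and l=l and R=R, OF w y0] unfolding g_def by blast
  \<comment> \<open>either the untilted mean is already at most R, or the drift g crosses zero on [0, t]\<close>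
  obtain \<theta> where "\<theta> \<ge> 0" "g \<theta> \<le> 0" "\<theta> * g \<theta> = 0"
  proof (cases "g 0 \<le> 0")
    case False
    have "continuous_on {0..t} g" unfolding g_def by (intro continuous_intros)
    then obtain \<theta> where "0 \<le> \<theta>" "g \<theta> = 0"
      using IVT2'[of g t 0 0] \<open>g t < 0\<close> \<open>t \<ge> 0\<close> False by auto
    then show ?thesis using that by simp
  qed (use that[of 0] in simp)
  define Z where "Z = (\<Sum>z\<in>UNIV. w z * exp (- \<theta> * l z))"
  define m where "m = (\<Sum>y\<in>UNIV. w y * exp (- \<theta> * l y) / Z * l y)"
  have "Z > 0" unfolding Z_def using w y0(1) by (intro sum_pos2[of _ y0]) auto
  have "Z * m = (\<Sum>y\<in>UNIV. w y * exp (- \<theta> * l y) * l y)"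
    unfolding m_def using \<open>Z > 0\<close> by (simp add: sum_distrib_left)
  moreover have "g \<theta> = (\<Sum>y\<in>UNIV. w y * exp (- \<theta> * l y) * l y) - Z * R"
    unfolding g_def Z_def by (simp add: sum_subtractf right_diff_distrib sum_distrib_right)
  ultimately have "g \<theta> = Z * (m - R)" by (simp add: right_diff_distrib)
  then have "m \<le> R" "\<theta> * m = \<theta> * R"
    using \<open>g \<theta> \<le> 0\<close> \<open>\<theta> * g \<theta> = 0\<close> \<open>Z > 0\<close> by (simp_all add: mult_le_0_iff)
  then show ?thesis using that \<open>\<theta> \<ge> 0\<close> unfolding m_def Z_def by blast
qed

lemma walk_step_pow_lower_bound_by_tilting:
  fixes w l :: "'y::finite \<Rightarrow> real"
  assumes w: "\<And>y. w y \<ge> 0" and "\<theta> \<ge> 0" and Z: "Z = (\<Sum>y\<in>UNIV. w y * exp (- \<theta> * l y))" "Z > 0"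
    and m: "m \<le> R" "\<theta> * m = \<theta> * R" and "c \<ge> 0"
    and window: "(walk_step UNIV (\<lambda>y. w y * exp (- \<theta> * l y) / Z) l ^^ N)
                   (indicator {real N * m - k - g..real N * m - k}) 0 \<ge> c"
  shows "(walk_step UNIV w l ^^ N) (indicator {..real N * R - k}) 0
           \<ge> exp (- \<theta> * (k + g)) * c * exp (- real N * (- \<theta> * R - ln Z))"
proof -
  let ?q = "\<lambda>y. w y * exp (- \<theta> * l y) / Z" and ?b = "real N * m - k"
  have "real N * m \<le> real N * R" by (rule mult_left_mono[OF m(1)]) simp
  then have "exp (\<theta> * (?b - g)) * indicator {?b - g..?b} t \<le> exp (\<theta> * t) * indicator {..real N * R - k} t"
    for t :: real
    using \<open>\<theta> \<ge> 0\<close> by (auto simp: indicator_def mult_left_mono)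
  then have "(walk_step UNIV ?q l ^^ N) (\<lambda>t. exp (\<theta> * (?b - g)) * indicator {?b - g..?b} t) 0
      \<le> (walk_step UNIV ?q l ^^ N) (\<lambda>t. exp (\<theta> * t) * indicator {..real N * R - k} t) 0"
    using w Z(2) by (intro walk_step_pow_mono) auto
  moreover have "exp (\<theta> * (?b - g)) * c
      \<le> (walk_step UNIV ?q l ^^ N) (\<lambda>t. exp (\<theta> * (?b - g)) * indicator {?b - g..?b} t) 0"
    unfolding walk_step_pow_scale using window by (intro mult_left_mono) auto
  ultimately have "Z ^ N * (exp (\<theta> * (?b - g)) * c)
      \<le> Z ^ N * (walk_step UNIV ?q l ^^ N) (\<lambda>t. exp (\<theta> * t) * indicator {..real N * R - k} t) 0"
    using Z(2) by (intro mult_left_mono) auto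
  also have "\<dots> = (walk_step UNIV w l ^^ N) (indicator {..real N * R - k}) 0"
    using walk_step_pow_tilt[where Z=Z and I=UNIV and p=w and a=l and N=N and s=0 and \<theta>=\<theta>] Z(2) by simp
  also have "Z ^ N * (exp (\<theta> * (?b - g)) * c) = exp (- \<theta> * (k + g)) * c * exp (- real N * (- \<theta> * R - ln Z))"
  proof -
    have "Z ^ N = exp (real N * ln Z)" using Z(2) by (simp add: exp_of_nat_mult)
    moreover have "\<theta> * (?b - g) = real N * (\<theta> * m) - \<theta> * (k + g)" by (simp add: algebra_simps)
    ultimately show ?thesis unfolding m(2) by (simp add: exp_add[symmetric] algebra_simps)
  qed
  finally show ?thesis .
qed

lemma walk_step_pow_below_threshold_degenerate:
  fixes w l :: "'y::finite \<Rightarrow> real"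
  assumes "(\<Sum>y\<in>UNIV. w y) = 1" and "\<And>y. w y \<noteq> 0 \<Longrightarrow> l y = L" and "L < R"
  shows "\<forall>\<^sub>F N in sequentially. (walk_step UNIV w l ^^ N) (indicator {..real N * R - k}) 0 = 1"
proof -
  have "\<forall>\<^sub>F N in sequentially. real N \<ge> k / (R - L)"
    using filterlim_real_sequentially by (simp add: filterlim_at_top)
  moreover have "real N * L \<le> real N * R - k" if "real N \<ge> k / (R - L)" for N
    using that \<open>L < R\<close> by (simp add: divide_le_eq algebra_simps)
  ultimately show ?thesis using walk_step_pow_degenerate[OF assms(1)] assms(2) by (auto elim: eventually_mono)
qed

lemma walk_step_pow_lower_deviation:
  fixes w l :: "'y::finite \<Rightarrow> real" and R k :: real
  assumes w: "\<And>y. w y \<ge> 0" "(\<Sum>y\<in>UNIV. w y) = 1" and y0: "w y0 > 0" "l y0 < R" and "k \<ge> 0"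
  shows "\<exists>\<theta>\<ge>0. \<exists>c>0. \<forall>\<^sub>F N in sequentially. (walk_step UNIV w l ^^ N) (indicator {..real N * R - k}) 0
           \<ge> c / sqrt N * exp (- real N * (- \<theta> * R - ln (\<Sum>y\<in>UNIV. w y * exp (- \<theta> * l y))))"
proof (cases "\<forall>y. w y \<noteq> 0 \<longrightarrow> l y = l y0")
  case True
  then have "\<forall>\<^sub>F N in sequentially. (walk_step UNIV w l ^^ N) (indicator {..real N * R - k}) 0 = 1"
    using walk_step_pow_below_threshold_degenerate[OF w(2) _ y0(2)] by blast
  moreover have "1 / sqrt N \<le> 1" for N :: nat by (cases "N = 0") simp_all
  ultimately show ?thesis using w(2) by (intro exI[of _ 0] conjI exI[of _ 1]) (auto elim: eventually_mono)
next
  case False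
  then obtain y1 where y1: "w y1 > 0" "l y1 \<noteq> l y0" using w(1) by (auto simp: less_le)
  obtain \<theta> where "\<theta> \<ge> 0"
    and m: "(\<Sum>y\<in>UNIV. w y * exp (- \<theta> * l y) / (\<Sum>z\<in>UNIV. w z * exp (- \<theta> * l z)) * l y) \<le> R"
      "\<theta> * (\<Sum>y\<in>UNIV. w y * exp (- \<theta> * l y) / (\<Sum>z\<in>UNIV. w z * exp (- \<theta> * l z)) * l y) = \<theta> * R"
    using exists_tilt_parameter[where w=w and l=l and R=R, OF w(1) y0] by blast
  define Z where "Z = (\<Sum>y\<in>UNIV. w y * exp (- \<theta> * l y))"
  define q where "q y = w y * exp (- \<theta> * l y) / Z" for y
  define m where "m = (\<Sum>y\<in>UNIV. q y * l y)"
  have "Z > 0" unfolding Z_def using w(1) y0(1) by (intro sum_pos2[of _ y0]) auto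
  have q: "\<forall>y\<in>UNIV. q y \<ge> 0" "(\<Sum>y\<in>UNIV. q y) = 1" "q y0 > 0" "q y1 > 0"
    using \<open>Z > 0\<close> w(1) y0(1) y1(1) unfolding q_def Z_def by (simp_all flip: sum_divide_distrib)
  obtain i0 i1 where i: "q i0 > 0" "q i1 > 0" "l i0 < m" "m < l i1"
    using exists_support_points_around_mean[OF finite_class.finite_UNIV q(1,2) m_def _ _ q(3,4) y1(2)[symmetric]]
    by auto
  obtain c where "c > 0" and c: "\<forall>\<^sub>F N in sequentially.
      (walk_step UNIV q l ^^ N) (indicator {real N * m - k - (l i1 - l i0)..real N * m - k}) 0 \<ge> c / sqrt N"
    using walk_step_pow_window_lower_bound[OF finite_class.finite_UNIV q(1,2) m_def _ _ i \<open>k \<ge> 0\<close>] by auto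
  have "\<forall>\<^sub>F N in sequentially. (walk_step UNIV w l ^^ N) (indicator {..real N * R - k}) 0
      \<ge> exp (- \<theta> * (k + (l i1 - l i0))) * (c / sqrt N) * exp (- real N * (- \<theta> * R - ln Z))"
    using c m \<open>c > 0\<close> unfolding m_def q_def Z_def[symmetric]
    by (elim eventually_mono, intro walk_step_pow_lower_bound_by_tilting[OF w(1) \<open>\<theta> \<ge> 0\<close> Z_def \<open>Z > 0\<close>]) auto
  with \<open>c > 0\<close> \<open>\<theta> \<ge> 0\<close> show ?thesis
    unfolding Z_def by (intro exI[of _ \<theta>] conjI exI[of _ "exp (- \<theta> * (k + (l i1 - l i0))) * c"]) auto
qed

section \<open>Symmetric channels with feedback\<close>

definition ln_inv_alpha :: "('x::finite \<Rightarrow> 'y::finite \<Rightarrow> real) \<Rightarrow> 'y \<Rightarrow> real" where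
  "ln_inv_alpha W y = ln (1 / alpha W y)"

lemma alpha_eq_if_columns_permuted:
  assumes "bij \<pi>" and "\<And>x. W x y' = W (\<pi> x) y"
  shows "alpha W y' = alpha W y"
proof -
  have "{x. W x y' > 0} = \<pi> -` {x. W x y > 0}" using assms(2) by auto
  moreover have "card (\<pi> -` {x. W x y > 0}) = card {x. W x y > 0}"
    using assms(1) by (intro card_vimage_inj) (auto simp: bij_def)
  ultimately show ?thesis unfolding alpha_def by simp
qed

lemma gallager_symmetric_row_sums_eq:
  fixes W :: "'x::finite \<Rightarrow> 'y::finite \<Rightarrow> real"
  assumes "gallager_symmetric W"
  shows "(\<Sum>y\<in>UNIV. W x y * G (alpha W y)) = (\<Sum>y\<in>UNIV. W x' y * G (alpha W y))"
proof -
  obtain P where P: "partition_on UNIV P"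
    and rows: "\<And>B x x'. B \<in> P \<Longrightarrow> \<exists>\<sigma>. bij_betw \<sigma> B B \<and> (\<forall>y\<in>B. W x' y = W x (\<sigma> y))"
    and cols: "\<And>B y y'. B \<in> P \<Longrightarrow> y \<in> B \<Longrightarrow> y' \<in> B \<Longrightarrow> \<exists>\<pi>. bij \<pi> \<and> (\<forall>x. W x y' = W (\<pi> x) y)"
    using assms unfolding gallager_symmetric_def by metis
  have block: "(\<Sum>y\<in>B. W x y * G (alpha W y)) = (\<Sum>y\<in>B. W x' y * G (alpha W y))" if B: "B \<in> P" for B
  proof -
    obtain \<sigma> where \<sigma>: "bij_betw \<sigma> B B" "\<forall>y\<in>B. W x' y = W x (\<sigma> y)" using rows[OF B] by blast
    have "alpha W y = alpha W (\<sigma> y)" if "y \<in> B" for y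
      using cols[OF B that bij_betw_apply[OF \<sigma>(1) that]] alpha_eq_if_columns_permuted by metis
    then have "(\<Sum>y\<in>B. W x' y * G (alpha W y)) = (\<Sum>y\<in>B. W x (\<sigma> y) * G (alpha W (\<sigma> y)))"
      using \<sigma>(2) by simp
    also have "\<dots> = (\<Sum>y\<in>B. W x y * G (alpha W y))"
      using sum.reindex_bij_betw[OF \<sigma>(1), of "\<lambda>y. W x y * G (alpha W y)"] by simp
    finally show ?thesis by simp
  qed
  have "disjoint P" "\<Union>P = UNIV" using P unfolding partition_on_def by auto
  then show ?thesis
    using sum.Union_disjoint[of P "\<lambda>y. W x y * G (alpha W y)"] sum.Union_disjoint[of P "\<lambda>y. W x' y * G (alpha W y)"]
      block by (simp add: disjoint_def)
qed

lemma gallager_symmetric_cost_law: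
  fixes W :: "'x::finite \<Rightarrow> 'y::finite \<Rightarrow> real"
  assumes "gallager_symmetric W"
  shows "(\<Sum>y\<in>UNIV. W x y * G (ln_inv_alpha W y)) = (\<Sum>y\<in>UNIV. W x' y * G (ln_inv_alpha W y))"
  using gallager_symmetric_row_sums_eq[OF assms, of x "\<lambda>a. G (ln (1 / a))" x'] unfolding ln_inv_alpha_def .

lemma sum_lists_length_Suc:
  "(\<Sum>ys\<in>{ys :: 'y::finite list. length ys = Suc N}. f ys) = (\<Sum>y\<in>UNIV. \<Sum>zs\<in>{zs. length zs = N}. f (y # zs))"
proof -
  have "{ys :: 'y list. length ys = Suc N} = (\<lambda>(y, zs). y # zs) ` (UNIV \<times> {zs. length zs = N})"
    by (auto simp: length_Suc_conv)
  moreover have "inj_on (\<lambda>(y, zs). y # zs) (UNIV \<times> {zs :: 'y list. length zs = N})"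
    by (auto simp: inj_on_def)
  ultimately show ?thesis by (simp add: sum.reindex sum.cartesian_product case_prod_unfold)
qed

lemma adaptive_sum_eq_walk:
  fixes W :: "'x::finite \<Rightarrow> 'y::finite \<Rightarrow> real" and l w :: "'y \<Rightarrow> real"
  assumes law: "\<And>x G. (\<Sum>y\<in>UNIV. W x y * G (l y)) = (\<Sum>y\<in>UNIV. w y * G (l y))"
  shows "(\<Sum>ys\<in>{ys. length ys = N}. (\<Prod>n<N. W (\<psi> (take n ys)) (ys ! n)) * F (s + (\<Sum>n<N. l (ys ! n))))
           = (walk_step UNIV w l ^^ N) F s"
proof (induction N arbitrary: \<psi> s)
  case (Suc N)
  have "(\<Sum>ys\<in>{ys. length ys = Suc N}. (\<Prod>n<Suc N. W (\<psi> (take n ys)) (ys ! n)) * F (s + (\<Sum>n<Suc N. l (ys ! n))))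
      = (\<Sum>y\<in>UNIV. W (\<psi> []) y * (\<Sum>zs\<in>{zs. length zs = N}.
           (\<Prod>n<N. W (\<psi> (y # take n zs)) (zs ! n)) * F ((s + l y) + (\<Sum>n<N. l (zs ! n)))))"
    unfolding sum_lists_length_Suc
    by (simp add: prod.lessThan_Suc_shift sum.lessThan_Suc_shift sum_distrib_left algebra_simps
        del: prod.lessThan_Suc sum.lessThan_Suc)
  also have "\<dots> = (\<Sum>y\<in>UNIV. W (\<psi> []) y * (walk_step UNIV w l ^^ N) F (s + l y))"
    using Suc.IH[where \<psi>="\<lambda>zs. \<psi> (y # zs)" and s="s + l y" for y] by simp
  also have "\<dots> = (walk_step UNIV w l ^^ Suc N) F s"
    unfolding walk_step_pow_Suc by (rule law)
  finally show ?case .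
qed simp

lemma sum_Sset_eq_walk:
  fixes W :: "'x::finite \<Rightarrow> 'y::finite \<Rightarrow> real"
  assumes "\<And>x G. (\<Sum>y\<in>UNIV. W x y * G (ln_inv_alpha W y)) = (\<Sum>y\<in>UNIV. w y * G (ln_inv_alpha W y))"
  shows "(\<Sum>ys\<in>Sset W N r. \<Prod>n<N. W (\<psi> (take n ys)) (ys ! n))
           = (walk_step UNIV w (ln_inv_alpha W) ^^ N) (indicator {t. t / real N \<le> r}) 0"
proof -
  have S: "Sset W N r = {ys. length ys = N} \<inter> {ys. (\<Sum>n<N. ln_inv_alpha W (ys ! n)) / real N \<le> r}"
    unfolding Sset_def ln_inv_alpha_def by auto
  have "(\<Sum>ys\<in>Sset W N r. \<Prod>n<N. W (\<psi> (take n ys)) (ys ! n))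
      = (\<Sum>ys\<in>{ys. length ys = N}. (\<Prod>n<N. W (\<psi> (take n ys)) (ys ! n))
           * indicator {t. t / real N \<le> r} (0 + (\<Sum>n<N. ln_inv_alpha W (ys ! n))))"
    unfolding S using finite_lists_length_eq[of "UNIV :: 'y set" N]
    by (simp add: sum.inter_restrict indicator_def)
  also have "\<dots> = (walk_step UNIV w (ln_inv_alpha W) ^^ N) (indicator {t. t / real N \<le> r}) 0"
    by (rule adaptive_sum_eq_walk[OF assms])
  finally show ?thesis .
qed

section \<open>Lower bounds on the sphere-packing exponent\<close>

lemma mult_ln_div_ge_diff:
  assumes "(a::real) > 0" "b > 0"
  shows "a * ln (a / b) \<ge> a - b"
proof -
  have "ln (b / a) \<le> b / a - 1" using assms by (intro ln_le_minus_one) simp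
  then have "a * ln (b / a) \<le> a * (b / a - 1)" using assms by (intro mult_left_mono) auto
  then show ?thesis using assms by (simp add: ln_div algebra_simps)
qed

lemma gibbs_inequality:
  fixes P Q :: "'a \<Rightarrow> real"
  assumes "finite A" and "\<forall>y\<in>A. P y \<ge> 0" "\<forall>y\<in>A. Q y \<ge> 0" "\<forall>y\<in>A. P y > 0 \<longrightarrow> Q y > 0"
  shows "(\<Sum>y\<in>A. if P y = 0 then 0 else P y * ln (P y / Q y)) \<ge> (\<Sum>y\<in>A. P y) - (\<Sum>y\<in>A. Q y)"
proof -
  have "P y - Q y \<le> (if P y = 0 then 0 else P y * ln (P y / Q y))" if "y \<in> A" for y
    using assms(2-4) that mult_ln_div_ge_diff[of "P y" "Q y"] by (auto simp: less_le)
  then show ?thesis by (simp add: sum_subtractf[symmetric] sum_mono)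
qed

abbreviation uniform :: "'x::finite \<Rightarrow> real" where
  "uniform \<equiv> \<lambda>_. 1 / real CARD('x)"

lemma mutual_info_column_ge:
  fixes V W :: "'x::finite \<Rightarrow> 'y::finite \<Rightarrow> real"
  assumes V0: "\<And>x. V x y \<ge> 0" and supp: "\<And>x. V x y > 0 \<Longrightarrow> W x y > 0"
  shows "(\<Sum>x\<in>UNIV. if uniform x * V x y > 0 then uniform x * V x y * ln (V x y / out_dist uniform V y) else 0)
           \<ge> out_dist uniform V y * ln_inv_alpha W y"
proof (cases "out_dist uniform V y = 0")
  case True
  then have "\<forall>x\<in>UNIV. uniform x * V x y = 0"
    unfolding out_dist_def using V0 by (subst sum_nonneg_eq_0_iff[symmetric]) auto
  then show ?thesis using True by simp
next
  case False
  define a where "a x = uniform x * V x y" for x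
  define out where "out = out_dist uniform V y"
  define c where "c = real (card {x. W x y > 0})"
  have a0: "a x \<ge> 0" for x unfolding a_def using V0 by simp
  have out: "out = (\<Sum>x\<in>UNIV. a x)" unfolding out_def out_dist_def a_def ..
  have "out > 0" using False a0 unfolding out out_def[symmetric] by (simp add: less_le sum_nonneg)
  moreover have "out = 0" if "\<forall>x. a x = 0" unfolding out using that by simp
  ultimately obtain x0 where "a x0 \<noteq> 0" by auto
  then have "a x0 > 0" using a0[of x0] by simp
  then have "W x0 y > 0" using supp unfolding a_def by (simp add: zero_less_divide_iff)
  then have "c > 0" unfolding c_def by (auto simp: card_gt_0_iff)
  \<comment> \<open>compare the column with the distribution spreading out evenly over the support of W(y|.)\<close>
  define Q where "Q x = (if W x y > 0 then out / c else 0)" for x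
  have "(\<Sum>x\<in>UNIV. Q x) = c * (out / c)" unfolding Q_def c_def by (simp add: sum.If_cases)
  also have "\<dots> = out" using \<open>c > 0\<close> by simp
  finally have sumQ: "(\<Sum>x\<in>UNIV. Q x) = out" .
  have "\<forall>x\<in>UNIV. Q x \<ge> 0" "\<forall>x\<in>UNIV. a x > 0 \<longrightarrow> Q x > 0"
    using \<open>out > 0\<close> \<open>c > 0\<close> supp unfolding Q_def a_def by (auto simp: zero_less_divide_iff)
  then have "0 \<le> (\<Sum>x\<in>UNIV. if a x = 0 then 0 else a x * ln (a x / Q x))"
    using gibbs_inequality[of UNIV a Q] a0 sumQ out by simp
  also have "\<dots> = (\<Sum>x\<in>UNIV. (if a x > 0 then a x * ln (V x y / out) else 0) - a x * ln_inv_alpha W y)"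
  proof (intro sum.cong refl)
    fix x
    show "(if a x = 0 then 0 else a x * ln (a x / Q x))
        = (if a x > 0 then a x * ln (V x y / out) else 0) - a x * ln_inv_alpha W y"
    proof (cases "a x > 0")
      case True
      then have "V x y > 0" "W x y > 0" using supp unfolding a_def by (auto simp: zero_less_divide_iff)
      then have "a x / Q x = (V x y / out) * (c / real CARD('x))" unfolding a_def Q_def by simp
      moreover have "V x y / out > 0" "c / real CARD('x) > 0" using \<open>V x y > 0\<close> \<open>out > 0\<close> \<open>c > 0\<close> by simp_all
      ultimately have "ln (a x / Q x) = ln (V x y / out) + ln (c / real CARD('x))"
        by (simp only: ln_mult_pos)
      moreover have "ln_inv_alpha W y = - ln (c / real CARD('x))"
        unfolding ln_inv_alpha_def alpha_def c_def by (simp add: ln_div)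
      ultimately show ?thesis
        using True by (simp add: algebra_simps)
    qed (use a0[of x] in auto)
  qed
  finally show ?thesis
    unfolding out_def[symmetric] a_def[symmetric] out by (simp add: sum_subtractf sum_distrib_right)
qed

lemma mutual_info_uniform_ge:
  fixes V W :: "'x::finite \<Rightarrow> 'y::finite \<Rightarrow> real"
  assumes "channel V" and supp: "\<And>x y. V x y > 0 \<Longrightarrow> W x y > 0"
  shows "mutual_info uniform V \<ge> (\<Sum>x\<in>UNIV. \<Sum>y\<in>UNIV. uniform x * V x y * ln_inv_alpha W y)"
proof -
  have V0: "V x y \<ge> 0" for x y using \<open>channel V\<close> unfolding channel_def pdist_def by simp
  have "(\<Sum>x\<in>UNIV. \<Sum>y\<in>UNIV. uniform x * V x y * ln_inv_alpha W y)
      = (\<Sum>y\<in>UNIV. out_dist uniform V y * ln_inv_alpha W y)"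
    unfolding out_dist_def by (subst sum.swap) (simp add: sum_distrib_right)
  also have "\<dots> \<le> (\<Sum>y\<in>UNIV. \<Sum>x\<in>UNIV.
      if uniform x * V x y > 0 then uniform x * V x y * ln (V x y / out_dist uniform V y) else 0)"
    using V0 supp by (intro sum_mono mutual_info_column_ge)
  also have "\<dots> = mutual_info uniform V" unfolding mutual_info_def by (rule sum.swap)
  finally show ?thesis .
qed

definition cond_div_real :: "('x::finite \<Rightarrow> 'y::finite \<Rightarrow> real) \<Rightarrow> ('x \<Rightarrow> 'y \<Rightarrow> real) \<Rightarrow> ('x \<Rightarrow> real) \<Rightarrow> real" where
  "cond_div_real V W Q = (\<Sum>x\<in>UNIV. \<Sum>y\<in>UNIV. if Q x * V x y = 0 then 0 else Q x * V x y * ln (V x y / W x y))"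

lemma cond_div_infinite_or_real:
  "cond_div V W Q = \<infinity>
   \<or> (\<forall>x y. Q x * V x y \<noteq> 0 \<longrightarrow> W x y \<noteq> 0) \<and> cond_div V W Q = ereal (cond_div_real V W Q)"
proof (cases "\<exists>x y. Q x * V x y \<noteq> 0 \<and> W x y = 0")
  case True
  then obtain x y where "Q x * V x y \<noteq> 0" "W x y = 0" by blast
  then have "cond_div V W Q = \<infinity>"
    unfolding cond_div_def sum_Pinfty by (intro conjI bexI[of _ x] bexI[of _ y]) auto
  then show ?thesis ..
next
  case False
  then have "cond_div V W Q = (\<Sum>x\<in>UNIV. \<Sum>y\<in>UNIV.
      ereal (if Q x * V x y = 0 then 0 else Q x * V x y * ln (V x y / W x y)))"
    unfolding cond_div_def by (intro sum.cong refl) auto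
  then show ?thesis using False unfolding cond_div_real_def by auto
qed

lemma E_SP_ge_uniform:
  fixes W :: "'x::finite \<Rightarrow> 'y::finite \<Rightarrow> real"
  assumes "channel W"
    and bound: "\<And>V. channel V \<Longrightarrow> (\<And>x y. V x y > 0 \<Longrightarrow> W x y > 0) \<Longrightarrow> mutual_info uniform V \<le> R
                  \<Longrightarrow> e \<le> ereal (cond_div_real V W uniform)"
  shows "e \<le> E_SP W R"
proof -
  have "e \<le> (INF V\<in>{V. channel V \<and> mutual_info uniform V \<le> R}. cond_div V W uniform)"
  proof (rule INF_greatest)
    fix V :: "'x \<Rightarrow> 'y \<Rightarrow> real"
    assume "V \<in> {V. channel V \<and> mutual_info uniform V \<le> R}"
    then have V: "channel V" "mutual_info uniform V \<le> R" by auto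
    show "e \<le> cond_div V W uniform"
      using cond_div_infinite_or_real[of V W uniform]
    proof
      assume H: "(\<forall>x y. uniform x * V x y \<noteq> 0 \<longrightarrow> W x y \<noteq> 0) \<and> cond_div V W uniform = ereal (cond_div_real V W uniform)"
      have "W x y > 0" if "V x y > 0" for x y
        using H that \<open>channel W\<close> unfolding channel_def pdist_def by (auto simp: less_le)
      then show ?thesis using bound[OF V(1) _ V(2)] H by simp
    qed simp
  qed
  also have "\<dots> \<le> E_SP W R" unfolding E_SP_def by (rule SUP_upper) (simp add: pdist_def)
  finally show ?thesis .
qed

lemma divergence_ge_tilted:
  fixes v w l :: "'y::finite \<Rightarrow> real"
  assumes v: "\<And>y. v y \<ge> 0" "(\<Sum>y\<in>UNIV. v y) = 1" and w: "\<And>y. w y \<ge> 0"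
    and supp: "\<And>y. v y > 0 \<Longrightarrow> w y > 0"
    and Z: "Z = (\<Sum>y\<in>UNIV. w y * exp (- \<theta> * l y))" "Z > 0"
  shows "(\<Sum>y\<in>UNIV. if v y = 0 then 0 else v y * ln (v y / w y)) \<ge> - \<theta> * (\<Sum>y\<in>UNIV. v y * l y) - ln Z"
proof -
  define q where "q y = w y * exp (- \<theta> * l y) / Z" for y
  have "(\<Sum>y\<in>UNIV. q y) = 1" unfolding q_def Z(1) using Z by (simp flip: sum_divide_distrib)
  then have "0 \<le> (\<Sum>y\<in>UNIV. if v y = 0 then 0 else v y * ln (v y / q y))"
    using gibbs_inequality[of UNIV v q] v w supp Z(2) unfolding q_def by simp
  also have "\<dots> = (\<Sum>y\<in>UNIV. (if v y = 0 then 0 else v y * ln (v y / w y)) + \<theta> * (v y * l y) + v y * ln Z)"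
  proof (intro sum.cong refl)
    fix y
    show "(if v y = 0 then 0 else v y * ln (v y / q y))
        = (if v y = 0 then 0 else v y * ln (v y / w y)) + \<theta> * (v y * l y) + v y * ln Z"
    proof (cases "v y = 0")
      case False
      then have "v y > 0" "w y > 0" using v(1) supp by (auto simp: less_le)
      then have "ln (v y / q y) = ln (v y / w y) + \<theta> * l y + ln Z"
        unfolding q_def using Z(2) by (simp add: ln_div ln_mult)
      then show ?thesis using False by (simp add: algebra_simps)
    qed simp
  qed
  also have "\<dots> = (\<Sum>y\<in>UNIV. if v y = 0 then 0 else v y * ln (v y / w y)) + \<theta> * (\<Sum>y\<in>UNIV. v y * l y) + ln Z"
    using v(2) by (simp add: sum.distrib sum_distrib_left flip: sum_distrib_right)
  finally show ?thesis by simp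
qed

lemma cond_div_real_uniform_ge_tilted:
  fixes V W :: "'x::finite \<Rightarrow> 'y::finite \<Rightarrow> real"
  assumes "channel W" "channel V" and supp: "\<And>x y. V x y > 0 \<Longrightarrow> W x y > 0" and "\<theta> \<ge> 0"
    and Z: "\<And>x. Z = (\<Sum>y\<in>UNIV. W x y * exp (- \<theta> * ln_inv_alpha W y))" "Z > 0"
    and "mutual_info uniform V \<le> R"
  shows "cond_div_real V W uniform \<ge> - \<theta> * R - ln Z"
proof -
  have V: "\<And>x y. V x y \<ge> 0" "\<And>x. (\<Sum>y\<in>UNIV. V x y) = 1" and W: "\<And>x y. W x y \<ge> 0"
    using assms(1,2) unfolding channel_def pdist_def by auto
  have "(\<Sum>x\<in>UNIV. \<Sum>y\<in>UNIV. uniform x * V x y * ln_inv_alpha W y) \<le> R"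
    using mutual_info_uniform_ge[of V W, OF assms(2) supp] \<open>mutual_info uniform V \<le> R\<close> by linarith
  then have "- \<theta> * R - ln Z \<le> - \<theta> * (\<Sum>x\<in>UNIV. \<Sum>y\<in>UNIV. uniform x * V x y * ln_inv_alpha W y) - ln Z"
    using \<open>\<theta> \<ge> 0\<close> by (simp add: mult_left_mono)
  also have "\<dots> = (\<Sum>x\<in>UNIV. uniform x * (- \<theta> * (\<Sum>y\<in>UNIV. V x y * ln_inv_alpha W y) - ln Z))"
    by (simp add: sum_subtractf sum_distrib_left sum_divide_distrib algebra_simps)
  also have "\<dots> \<le> (\<Sum>x\<in>UNIV. uniform x * (\<Sum>y\<in>UNIV. if V x y = 0 then 0 else V x y * ln (V x y / W x y)))"
    using divergence_ge_tilted[OF V(1) V(2) W supp Z] by (intro sum_mono mult_left_mono) auto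
  also have "\<dots> = cond_div_real V W uniform"
    unfolding cond_div_real_def by (simp add: sum_distrib_left mult.assoc if_distrib cong: if_cong)
  finally show ?thesis .
qed

lemma E_SP_infinite_below_min_cost:
  fixes W :: "'x::finite \<Rightarrow> 'y::finite \<Rightarrow> real"
  assumes "channel W" and L: "\<And>x y. W x y > 0 \<Longrightarrow> L \<le> ln_inv_alpha W y" and "R < L"
  shows "E_SP W R = \<infinity>"
proof -
  have False if V: "channel V" and supp: "\<And>x y. V x y > 0 \<Longrightarrow> W x y > 0" and "mutual_info uniform V \<le> R"
    for V :: "'x \<Rightarrow> 'y \<Rightarrow> real"
  proof -
    have V0: "V x y \<ge> 0" and V1: "(\<Sum>y\<in>UNIV. V x y) = 1" for x y
      using V unfolding channel_def pdist_def by auto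
    have "uniform x * V x y * L \<le> uniform x * V x y * ln_inv_alpha W y" for x y
    proof (cases "V x y > 0")
      case True
      then have "V x y * L \<le> V x y * ln_inv_alpha W y" using L[OF supp[OF True]] by (simp add: mult_left_mono)
      then show ?thesis by (simp add: divide_right_mono)
    qed (use V0[of x y] in simp)
    then have "(\<Sum>x\<in>UNIV. \<Sum>y\<in>UNIV. uniform x * V x y * L)
        \<le> (\<Sum>x\<in>UNIV. \<Sum>y\<in>UNIV. uniform x * V x y * ln_inv_alpha W y)"
      by (intro sum_mono)
    also have "\<dots> \<le> mutual_info uniform V" by (rule mutual_info_uniform_ge[of V W, OF V supp])
    also have "(\<Sum>x\<in>UNIV. \<Sum>y\<in>UNIV. uniform x * V x y * L) = (\<Sum>x\<in>(UNIV :: 'x set). uniform x * L * (\<Sum>y\<in>UNIV. V x y))"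
      by (simp add: sum_distrib_left sum_divide_distrib mult_ac)
    ultimately show False using V1 \<open>mutual_info uniform V \<le> R\<close> \<open>R < L\<close> by simp
  qed
  then have "\<infinity> \<le> E_SP W R" by (intro E_SP_ge_uniform[OF \<open>channel W\<close>]) blast
  then show ?thesis by (simp add: top_unique)
qed

lemma mutual_info_le_card:
  fixes W :: "'x::finite \<Rightarrow> 'y::finite \<Rightarrow> real"
  assumes W: "channel W" and Q: "pdist Q"
  shows "mutual_info Q W \<le> real CARD('x)"
proof -
  have W0: "W x y \<ge> 0" and W1: "(\<Sum>y\<in>UNIV. W x y) = 1" and Q0: "Q x \<ge> 0" for x y
    using W Q unfolding channel_def pdist_def by auto
  \<comment> \<open>each input contributes at most Q x * ln (1 / Q x) \<le> 1, since out_dist Q W y \<ge> Q x * W x y\<close>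
  have contribution: "(if Q x * W x y > 0 then Q x * W x y * ln (W x y / out_dist Q W y) else 0)
      \<le> W x y * (Q x * ln (1 / Q x))" for x y
  proof (cases "Q x * W x y > 0")
    case True
    have "Q x * W x y \<le> out_dist Q W y" unfolding out_dist_def
      by (rule member_le_sum[where f="\<lambda>x. Q x * W x y"]) (use Q0 W0 in auto)
    moreover have "W x y > 0" using True Q0[of x] W0[of x y] by (auto simp: zero_less_mult_iff)
    moreover have "0 < out_dist Q W y" using True \<open>Q x * W x y \<le> out_dist Q W y\<close> by linarith
    then have "0 < out_dist Q W y * (Q x * W x y)" using True by simp
    ultimately have "W x y / out_dist Q W y \<le> W x y / (Q x * W x y)"
      by (intro divide_left_mono) auto
    also have "\<dots> = 1 / Q x" using \<open>W x y > 0\<close> by simp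
    finally have ln_le: "ln (W x y / out_dist Q W y) \<le> ln (1 / Q x)"
      using True \<open>Q x * W x y \<le> out_dist Q W y\<close> \<open>W x y > 0\<close> by (intro ln_mono) auto
    show ?thesis using True mult_left_mono[OF ln_le, of "Q x * W x y"] by (simp add: mult_ac)
  next
    case False
    then have "Q x = 0 \<or> W x y = 0" using Q0[of x] W0[of x y] by (auto simp: zero_less_mult_iff less_le)
    then show ?thesis by auto
  qed
  have row: "Q x * ln (1 / Q x) \<le> 1" for x
  proof (cases "Q x = 0")
    case False
    then have "Q x > 0" using Q0[of x] by (simp add: less_le)
    then have "Q x * ln (1 / Q x) \<le> Q x * (1 / Q x - 1)" by (intro mult_left_mono ln_le_minus_one) auto
    also have "\<dots> \<le> 1" using \<open>Q x > 0\<close> by (simp add: algebra_simps)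
    finally show ?thesis .
  qed simp
  have "mutual_info Q W \<le> (\<Sum>x\<in>UNIV. \<Sum>y\<in>UNIV. W x y * (Q x * ln (1 / Q x)))"
    unfolding mutual_info_def by (intro sum_mono contribution)
  also have "\<dots> \<le> (\<Sum>x\<in>(UNIV :: 'x set). 1)"
    using row by (intro sum_mono) (simp add: W1 flip: sum_distrib_right)
  finally show ?thesis by simp
qed

lemma bdd_above_E_SP_infinite:
  fixes W :: "'x::finite \<Rightarrow> 'y::finite \<Rightarrow> real"
  assumes "channel W"
  shows "bdd_above {R. E_SP W R = \<infinity>}"
proof (rule bdd_aboveI)
  fix R assume "R \<in> {R. E_SP W R = \<infinity>}"
  moreover have "E_SP W R \<le> 0" if "R \<ge> real CARD('x)"
    unfolding E_SP_def
  proof (rule SUP_least)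
    fix Q :: "'x \<Rightarrow> real" assume "Q \<in> {Q. pdist Q}"
    then have "mutual_info Q W \<le> R" using mutual_info_le_card[OF assms, of Q] that by simp
    then have "W \<in> {V. channel V \<and> mutual_info Q V \<le> R}" using assms by simp
    then have "(INF V\<in>{V. channel V \<and> mutual_info Q V \<le> R}. cond_div V W Q) \<le> cond_div W W Q"
      by (rule INF_lower)
    also have "cond_div W W Q = 0" unfolding cond_div_def by (intro sum.neutral ballI) (auto simp: zero_ereal_def)
    finally show "(INF V\<in>{V. channel V \<and> mutual_info Q V \<le> R}. cond_div V W Q) \<le> 0" .
  qed
  ultimately show "R \<le> real CARD('x)" by (cases "R \<ge> real CARD('x)") auto
qed

lemma E_SP_finite_above_R_inf:
  assumes "channel W" "R_inf W < R"
  shows "E_SP W R \<noteq> \<infinity>"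
  using cSup_upper[OF _ bdd_above_E_SP_infinite[OF assms(1)], of R] assms(2) unfolding R_inf_def by force

lemma E_SP_ge_tilted:
  fixes W :: "'x::finite \<Rightarrow> 'y::finite \<Rightarrow> real"
  assumes "channel W" "R_inf W < R" "\<theta> \<ge> 0"
    and Z: "\<And>x. Z = (\<Sum>y\<in>UNIV. W x y * exp (- \<theta> * ln_inv_alpha W y))" "Z > 0"
  shows "- \<theta> * R - ln Z \<le> real_of_ereal (E_SP W R)"
proof -
  have "ereal (- \<theta> * R - ln Z) \<le> E_SP W R"
  proof (rule E_SP_ge_uniform[OF assms(1)])
    fix V :: "'x \<Rightarrow> 'y \<Rightarrow> real"
    assume "channel V" and "\<And>x y. V x y > 0 \<Longrightarrow> W x y > 0" and "mutual_info uniform V \<le> R"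
    then show "ereal (- \<theta> * R - ln Z) \<le> ereal (cond_div_real V W uniform)"
      using cond_div_real_uniform_ge_tilted[OF assms(1)] assms(3) Z by simp
  qed
  then show ?thesis using E_SP_finite_above_R_inf[OF assms(1,2)] by (cases "E_SP W R") auto
qed

lemma R_inf_ge:
  assumes "channel W" and "\<And>R. R < L \<Longrightarrow> E_SP W R = \<infinity>"
  shows "L \<le> R_inf W"
proof (rule ccontr)
  assume "\<not> L \<le> R_inf W"
  then have "E_SP W ((R_inf W + L) / 2) = \<infinity>" by (intro assms(2)) simp
  then have "(R_inf W + L) / 2 \<le> R_inf W"
    unfolding R_inf_def by (intro cSup_upper bdd_above_E_SP_infinite[OF assms(1)]) simp
  with \<open>\<not> L \<le> R_inf W\<close> show False by simp
qed

lemma row_law_same_support: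
  fixes W :: "'x::finite \<Rightarrow> 'y::finite \<Rightarrow> real"
  assumes law: "\<And>G. (\<Sum>y\<in>UNIV. W x y * G (l y)) = (\<Sum>y\<in>UNIV. w y * G (l y))"
    and "\<And>y. W x y \<ge> 0" and "W x y > 0"
  obtains y' where "w y' \<noteq> 0" "l y' = l y"
proof -
  have "0 < (\<Sum>y'\<in>UNIV. W x y' * indicator {l y} (l y'))"
    using assms(2,3) member_le_sum[of y UNIV "\<lambda>y'. W x y' * indicator {l y} (l y')"] by simp
  then have "(\<Sum>y'\<in>UNIV. w y' * indicator {l y} (l y')) \<noteq> 0" unfolding law by simp
  then obtain y' where "w y' * indicator {l y} (l y') \<noteq> 0" by (meson sum.neutral)
  then show ?thesis using that by (auto simp: indicator_def split: if_splits)
qed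

lemma exists_output_below_rate:
  fixes W :: "'x::finite \<Rightarrow> 'y::finite \<Rightarrow> real"
  assumes W: "channel W" and law: "\<And>x G. (\<Sum>y\<in>UNIV. W x y * G (ln_inv_alpha W y)) = (\<Sum>y\<in>UNIV. w y * G (ln_inv_alpha W y))"
    and w: "\<And>y. w y \<ge> 0" and "R_inf W < R"
  shows "\<exists>y0. w y0 > 0 \<and> ln_inv_alpha W y0 < R"
proof (rule ccontr)
  assume "\<not> ?thesis"
  then have "R \<le> ln_inv_alpha W y'" if "w y' > 0" for y' using that by (meson not_le)
  then have "R \<le> ln_inv_alpha W y" if pos: "W x y > 0" for x y
  proof -
    have "W x y' \<ge> 0" for y' using W unfolding channel_def pdist_def by simp
    then obtain y' where "w y' \<noteq> 0" "ln_inv_alpha W y' = ln_inv_alpha W y"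
      using row_law_same_support[where W=W and w=w and x=x and l="ln_inv_alpha W", OF law _ pos] by blast
    then show ?thesis using \<open>\<And>y'. w y' > 0 \<Longrightarrow> R \<le> ln_inv_alpha W y'\<close> w by (metis less_eq_real_def)
  qed
  then have "R \<le> R_inf W" using W by (intro R_inf_ge E_SP_infinite_below_min_cost) auto
  with \<open>R_inf W < R\<close> show False by simp
qed

lemma prob_const_Sset_eq_walk:
  fixes W :: "'x::finite \<Rightarrow> 'y::finite \<Rightarrow> real"
  assumes "\<And>x G. (\<Sum>y\<in>UNIV. W x y * G (ln_inv_alpha W y)) = (\<Sum>y\<in>UNIV. W x\<^sub>o y * G (ln_inv_alpha W y))"
    and "N > 0"
  shows "prob_const W N x\<^sub>o (Sset W N (R - k / real N))
           = (walk_step UNIV (W x\<^sub>o) (ln_inv_alpha W) ^^ N) (indicator {..real N * R - k}) 0"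
proof -
  have "{t. t / real N \<le> R - k / real N} = {..real N * R - k}"
    using \<open>N > 0\<close> by (auto simp: field_simps)
  then show ?thesis
    using sum_Sset_eq_walk[OF assms(1), where N=N and r="R - k / real N" and \<psi>="\<lambda>_. x\<^sub>o"]
    unfolding prob_const_def by simp
qed

lemma prob_const_Sset_lower_bound:
  fixes W :: "'x::finite \<Rightarrow> 'y::finite \<Rightarrow> real" and R k :: real
  assumes W: "channel W"
    and law: "\<And>x G. (\<Sum>y\<in>UNIV. W x y * G (ln_inv_alpha W y)) = (\<Sum>y\<in>UNIV. W x\<^sub>o y * G (ln_inv_alpha W y))"
    and "R_inf W < R" "k > 0"
  shows "\<exists>K>0. \<forall>\<^sub>F N in sequentially.
           prob_const W N x\<^sub>o (Sset W N (R - k / real N)) \<ge> K / sqrt (real N) * exp (- real N * real_of_ereal (E_SP W R))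
           \<and> K / sqrt (real N) * exp (- real N * real_of_ereal (E_SP W R)) > 0"
proof -
  define w where "w = W x\<^sub>o"
  have w: "\<And>y. w y \<ge> 0" "(\<Sum>y\<in>UNIV. w y) = 1" using W unfolding w_def channel_def pdist_def by auto
  obtain y0 where y0: "w y0 > 0" "ln_inv_alpha W y0 < R"
    using exists_output_below_rate[OF W law[folded w_def] w(1) \<open>R_inf W < R\<close>] by blast
  obtain \<theta> c where "\<theta> \<ge> 0" "c > 0" and c: "\<forall>\<^sub>F N in sequentially.
      (walk_step UNIV w (ln_inv_alpha W) ^^ N) (indicator {..real N * R - k}) 0 \<ge> c / sqrt N
        * exp (- real N * (- \<theta> * R - ln (\<Sum>y\<in>UNIV. w y * exp (- \<theta> * ln_inv_alpha W y))))"
    using walk_step_pow_lower_deviation[where l="ln_inv_alpha W" and k=k, OF w y0] \<open>k > 0\<close> by auto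
  define Z where "Z = (\<Sum>y\<in>UNIV. w y * exp (- \<theta> * ln_inv_alpha W y))"
  have "Z > 0" unfolding Z_def using w(1) y0(1) by (intro sum_pos2[of _ y0]) auto
  moreover have "Z = (\<Sum>y\<in>UNIV. W x y * exp (- \<theta> * ln_inv_alpha W y))" for x
    using law[of x "\<lambda>t. exp (- \<theta> * t)"] unfolding Z_def w_def by simp
  ultimately have E: "- \<theta> * R - ln Z \<le> real_of_ereal (E_SP W R)"
    using E_SP_ge_tilted[OF W \<open>R_inf W < R\<close> \<open>\<theta> \<ge> 0\<close>] by blast
  have "c / sqrt N * exp (- real N * real_of_ereal (E_SP W R)) \<le> c / sqrt N * exp (- real N * (- \<theta> * R - ln Z))"
    for N :: nat
    using E \<open>c > 0\<close> by (intro mult_left_mono) (auto simp: mult_left_mono)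
  then have "\<forall>\<^sub>F N in sequentially. prob_const W N x\<^sub>o (Sset W N (R - k / real N))
      \<ge> c / sqrt N * exp (- real N * real_of_ereal (E_SP W R))
      \<and> c / sqrt N * exp (- real N * real_of_ereal (E_SP W R)) > 0"
    using eventually_conj[OF eventually_gt_at_top[of 0] c[folded Z_def]] \<open>c > 0\<close>
    by (elim eventually_mono) (auto simp: prob_const_Sset_eq_walk[OF law] w_def intro: order_trans)
  with \<open>c > 0\<close> show ?thesis by blast
qed

theorem lemma8:
  fixes W :: "'x::finite \<Rightarrow> 'y::finite \<Rightarrow> real"
    and R k :: real and x\<^sub>o :: 'x
  assumes "channel W" and "gallager_symmetric W" and "singular_channel W"
    and "R_cr W < capacity W"
    and "\<forall>y. \<exists>x. W x y > 0"
    and "R_inf W < R" and "R < capacity W"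
    and "k > 0"
  shows "(\<forall>(\<psi> :: 'y list \<Rightarrow> 'x) (N :: nat) (r :: real). r > 0 \<longrightarrow>
            (\<Sum>ys\<in>Sset W N r. \<Prod>n<N. W (\<psi> (take n ys)) (ys ! n))
              = prob_const W N x\<^sub>o (Sset W N r))
       \<and> (\<exists>K>0. \<forall>\<^sub>F N in sequentially.
            prob_const W N x\<^sub>o (Sset W N (R - k / real N))
              \<ge> K / sqrt (real N) * exp (- real N * real_of_ereal (E_SP W R))
            \<and> K / sqrt (real N) * exp (- real N * real_of_ereal (E_SP W R)) > 0)"
proof -
  \<comment> \<open>only symmetry, \<open>R_inf W < R\<close> and \<open>k > 0\<close> are needed\<close>
  have law: "\<And>x G. (\<Sum>y\<in>UNIV. W x y * G (ln_inv_alpha W y)) = (\<Sum>y\<in>UNIV. W x\<^sub>o y * G (ln_inv_alpha W y))"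
    by (rule gallager_symmetric_cost_law[OF assms(2)])
  have "(\<Sum>ys\<in>Sset W N r. \<Prod>n<N. W (\<psi> (take n ys)) (ys ! n)) = prob_const W N x\<^sub>o (Sset W N r)"
    for \<psi> :: "'y list \<Rightarrow> 'x" and N r
    using sum_Sset_eq_walk[OF law, where \<psi>=\<psi>] sum_Sset_eq_walk[OF law, where \<psi>="\<lambda>_. x\<^sub>o"]
    unfolding prob_const_def by simp
  moreover have "\<exists>K>0. \<forall>\<^sub>F N in sequentially.
      prob_const W N x\<^sub>o (Sset W N (R - k / real N)) \<ge> K / sqrt (real N) * exp (- real N * real_of_ereal (E_SP W R))
      \<and> K / sqrt (real N) * exp (- real N * real_of_ereal (E_SP W R)) > 0"
    by (rule prob_const_Sset_lower_bound[OF assms(1) law assms(6,8)])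
  ultimately show ?thesis by blast
qed

end
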